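(* In the setting described in the context, $$\mathbb{E}_{i\in[m]}\sum_{t=1}^k\big\|\mathsf{P}_{Y_i}\mathsf{P}_{Z\Omega_{-i}|W,Y_i}-\mathsf{P}_{Y_i}\mathsf{P}_{Z\Omega_{-i}|W,Y_i^{-t}}\big\|\le 3k\sqrt{\delta}.$$
   Context: Let $G=(\mathcal{X},\mathcal{A},\mu,V)$ be a $k$-player game: $\mathcal{X}=\mathcal{X}^1\times\cdots\times\mathcal{X}^k$, $\mathcal{A}=\mathcal{A}^1\times\cdots\times\mathcal{A}^k$ finite, $\mu$ a distribution on $\mathcal{X}$, $V:\mathcal{X}\times\mathcal{A}\to\{0,1\}$. Assume $G$ is $\alpha$-anchored with anchor sets $\mathcal{X}^t_\perp\subseteq\mathcal{X}^t$: the marginal probability that $x^t\in\mathcal{X}^t_\perp$ is at least $\alpha$ for each $t$, and $\mu(x)=\mu(x|_{\overline{F}_x})\prod_{t\in F_x}\mu(x^t)$ for all $x$, where $F_x=\{t:x^t\in\mathcal{X}^t_\perp\}$, $\overline F_x=[k]\setminus F_x$ and $\mu(x|_S)$, $\mu(x^t)$ are marginals. Fix $n$, integers $1\le m<n$, $C=\{m+1,\dots,n\}$, and a deterministic strategy for $G^n$, i.e. functions $f^t:(\mathcal{X}^t)^n\to(\mathcal{A}^t)^n$. Let $X=(X_1,\dots,X_n)$, $X_i=(X_i^1,\dots,X_i^k)$, be distributed as $\mu^{\otimes n}$, let $(A_1^t,\dots,A_n^t)=f^t(X_1^t,\dots,X_n^t)$, $A_i=(A_i^1,\dots,A_i^k)$,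 and $Z=(A_j)_{j\in C}$. Let $W$ be the event that $V(X_j,A_j)=1$ for all $j\in C$, assume $\Pr(W)>0$, and set $\delta=\frac{|C|\log|\mathcal{A}|+\log(1/\Pr(W))}{m}$. For each $i,t$ let $Y_i^t=X_i^t$ if $X_i^t\notin\mathcal{X}^t_\perp$ and $Y_i^t=\perp$ otherwise; $Y_i=(Y_i^1,\dots,Y_i^k)$; $Y_i^{-t}$ is $Y_i$ with coordinate $t$ omitted. For $i\in[m]$ let $D_i$ be a uniformly random subset of $[k]$ of size $k-1$, independent of each other and of $X$; $M_i=(Y_i^t)_{t\in D_i}$ and $\Omega_i=(D_i,M_i)$; for $j\in C$, $\Omega_j=X_j$. $\Omega_{-i}$ is $(\Omega_1,\dots,\Omega_n)$ with $\Omega_i$ omitted. Notation: $\mathsf{P}_{Y_i}\mathsf{P}_{Z\Omega_{-i}|W,Y_i}$ is the distribution $(y,z,\omega)\mapsto\mathsf{P}_{Y_i}(y)\mathsf{P}_{Z\Omega_{-i}|W,Y_i=y}(z,\omega)$, and $\mathsf{P}_{Y_i}\mathsf{P}_{Z\Omega_{-i}|W,Y_i^{-t}}$ is $(y,z,\omega)\mapsto\mathsf{P}_{Y_i}(y)\mathsf{P}_{Z\Omega_{-i}|W,Y_i^{-t}=y^{-t}}(z,\omega)$. $\|\cdot\|$ is total variation distance; $\mathbb{E}_{i\in[m]}$ is the uniform average. *)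

theory Defs
  imports "HOL-Probability.Probability"
begin

text \<open>Conventions: players are indexed by t in {0..<k}, rounds by i in {0..<n}
 (0-based).  The paper's [m] is {0..<m} and C = {m+1..n} is {m..<n}.\<close>

abbreviation prb :: "'w pmf \<Rightarrow> 'w set \<Rightarrow> real" where
  "prb P A \<equiv> measure_pmf.prob P A"

definition game :: "nat \<Rightarrow> (nat \<Rightarrow> 'q set) \<Rightarrow> (nat \<Rightarrow> 'a set) \<Rightarrow> 'q list pmf \<Rightarrow> bool" where
  "game k Xs As mu \<longleftrightarrow>
     (\<forall>t<k. finite (Xs t) \<and> finite (As t)) \<and>
     set_pmf mu \<subseteq> {x. length x = k \<and> (\<forall>t<k. x ! t \<in> Xs t)}"

definition marg :: "'q list pmf \<Rightarrow> nat set \<Rightarrow> 'q list \<Rightarrow> real" where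
  "marg mu S x = prb mu {y. \<forall>t\<in>S. y ! t = x ! t}"

definition Fset :: "nat \<Rightarrow> (nat \<Rightarrow> 'q set) \<Rightarrow> 'q list \<Rightarrow> nat set" where
  "Fset k Xb x = {t. t < k \<and> x ! t \<in> Xb t}"

definition anchored ::
  "nat \<Rightarrow> (nat \<Rightarrow> 'q set) \<Rightarrow> 'q list pmf \<Rightarrow> real \<Rightarrow> (nat \<Rightarrow> 'q set) \<Rightarrow> bool" where
  "anchored k Xs mu \<alpha> Xb \<longleftrightarrow>
     (\<forall>t<k. Xb t \<subseteq> Xs t \<and> prb mu {x. x ! t \<in> Xb t} \<ge> \<alpha>) \<and>
     (\<forall>x. length x = k \<and> (\<forall>t<k. x ! t \<in> Xs t) \<longrightarrow>
        pmf mu x = marg mu ({0..<k} - Fset k Xb x) x * (\<Prod>t\<in>Fset k Xb x. marg mu {t} x))"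

definition strategy ::
  "nat \<Rightarrow> nat \<Rightarrow> (nat \<Rightarrow> 'q set) \<Rightarrow> (nat \<Rightarrow> 'a set) \<Rightarrow> (nat \<Rightarrow> 'q list \<Rightarrow> 'a list) \<Rightarrow> bool" where
  "strategy k n Xs As f \<longleftrightarrow>
     (\<forall>t<k. \<forall>qs. length qs = n \<and> set qs \<subseteq> Xs t \<longrightarrow>
        length (f t qs) = n \<and> set (f t qs) \<subseteq> As t)"

definition sample :: "nat \<Rightarrow> nat \<Rightarrow> nat \<Rightarrow> 'q list pmf \<Rightarrow> ((nat \<Rightarrow> 'q list) \<times> (nat \<Rightarrow> nat set)) pmf" where
  "sample k n m mu = pair_pmf (Pi_pmf {0..<n} [] (\<lambda>_. mu))
      (Pi_pmf {0..<m} {} (\<lambda>_. pmf_of_set {S. S \<subseteq> {0..<k} \<and> card S = k - 1}))"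

definition ansv :: "nat \<Rightarrow> nat \<Rightarrow> (nat \<Rightarrow> 'q list \<Rightarrow> 'a list) \<Rightarrow> (nat \<Rightarrow> 'q list) \<Rightarrow> nat \<Rightarrow> 'a list" where
  "ansv k n f X i = map (\<lambda>t. f t (map (\<lambda>j. X j ! t) [0..<n]) ! i) [0..<k]"

definition Zv :: "nat \<Rightarrow> nat \<Rightarrow> nat \<Rightarrow> (nat \<Rightarrow> 'q list \<Rightarrow> 'a list) \<Rightarrow> (nat \<Rightarrow> 'q list) \<Rightarrow> 'a list list" where
  "Zv k m n f X = map (ansv k n f X) [m..<n]"

definition Wev :: "nat \<Rightarrow> nat \<Rightarrow> nat \<Rightarrow> (nat \<Rightarrow> 'q list \<Rightarrow> 'a list) \<Rightarrow> ('q list \<Rightarrow> 'a list \<Rightarrow> bool)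
     \<Rightarrow> ((nat \<Rightarrow> 'q list) \<times> (nat \<Rightarrow> nat set)) set" where
  "Wev k m n f V = {\<omega>. \<forall>j\<in>{m..<n}. V (fst \<omega> j) (ansv k n f (fst \<omega>) j)}"

text \<open>Y_i, with None playing the role of the symbol perp.\<close>
definition Yv :: "nat \<Rightarrow> (nat \<Rightarrow> 'q set) \<Rightarrow> (nat \<Rightarrow> 'q list) \<Rightarrow> nat \<Rightarrow> 'q option list" where
  "Yv k Xb X i = map (\<lambda>t. if X i ! t \<in> Xb t then None else Some (X i ! t)) [0..<k]"

definition omit :: "nat \<Rightarrow> 'b list \<Rightarrow> 'b list" where
  "omit t ys = take t ys @ drop (Suc t) ys"

text \<open>Omega_j: (D_j, M_j) for j < m (M_j = (Y_j^t)_{t in D_j}), X_j for j in C.\<close>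
definition Om :: "nat \<Rightarrow> nat \<Rightarrow> (nat \<Rightarrow> 'q set) \<Rightarrow> (nat \<Rightarrow> 'q list) \<Rightarrow> (nat \<Rightarrow> nat set) \<Rightarrow> nat
     \<Rightarrow> (nat set \<times> (nat \<Rightarrow> 'q option option)) + 'q list" where
  "Om k m Xb X D j = (if j < m
      then Inl (D j, (\<lambda>t. if t \<in> D j then Some (Yv k Xb X j ! t) else None))
      else Inr (X j))"

definition Om_minus :: "nat \<Rightarrow> nat \<Rightarrow> nat \<Rightarrow> (nat \<Rightarrow> 'q set) \<Rightarrow> (nat \<Rightarrow> 'q list) \<Rightarrow> (nat \<Rightarrow> nat set) \<Rightarrow> nat
     \<Rightarrow> ((nat set \<times> (nat \<Rightarrow> 'q option option)) + 'q list) list" where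
  "Om_minus k m n Xb X D i = map (Om k m Xb X D) (filter (\<lambda>j. j \<noteq> i) [0..<n])"

text \<open>The (sub)distribution (y, r) \<mapsto> P_Y(y) * P_{R | W, g(Y) = g(y)}(r).
 Conditional probabilities with a null conditioning event are 0 (x / 0 = 0).\<close>
definition PYcond :: "'w pmf \<Rightarrow> ('w \<Rightarrow> 'y) \<Rightarrow> ('w \<Rightarrow> 'r) \<Rightarrow> 'w set \<Rightarrow> ('y \<Rightarrow> 'g) \<Rightarrow> 'y \<Rightarrow> 'r \<Rightarrow> real" where
  "PYcond P Y R W g y r =
     prb P {\<omega>. Y \<omega> = y} *
     (prb P {\<omega>. R \<omega> = r \<and> \<omega> \<in> W \<and> g (Y \<omega>) = g y} / prb P {\<omega>. \<omega> \<in> W \<and> g (Y \<omega>) = g y})"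

definition tvd :: "('y \<Rightarrow> 'r \<Rightarrow> real) \<Rightarrow> ('y \<Rightarrow> 'r \<Rightarrow> real) \<Rightarrow> real" where
  "tvd p q = (\<Sum>\<^sub>\<infinity>(y, r)\<in>UNIV. \<bar>p y r - q y r\<bar>) / 2"

end

theory Submission
  imports Defs
begin

text \<open>The distance between conditioning on \<open>Y\<^sub>i\<close> and on \<open>Y\<^sub>i\<^sup>-\<^sup>t\<close> is split by the triangle
  inequality into two copies of the distance between \<open>P\<^bsub>Y\<^sub>i\<^esub>\<close> and \<open>P\<^bsub>Y\<^sub>i|W\<^esub>\<close>, and a mixed term.
  Since the \<open>Y\<^sub>i\<close> are independent, Raz's lemma bounds the sum over \<open>i\<close> of the relative entropies
  of \<open>P\<^bsub>Y\<^sub>i|W\<^esub>\<close> to \<open>P\<^bsub>Y\<^sub>i\<^esub>\<close> by \<open>ln (1 / P W)\<close>, and Pinsker's inequality turns this into the first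
  term.  For the mixed term we use the random set \<open>D\<^sub>i\<close>: with probability \<open>1 / k\<close>, independently of
  everything else, \<open>D\<^sub>i = [k] - {t}\<close>, and then \<open>\<Omega>\<^sub>i\<close> reveals exactly \<open>Y\<^sub>i\<^sup>-\<^sup>t\<close>.  Hence the mixed terms,
  summed over \<open>t\<close>, are at most \<open>k\<close> times the distance between \<open>P\<^bsub>Y\<^sub>i \<Omega>\<^sub>i Z \<Omega>\<^sub>-\<^sub>i|W\<^esub>\<close> and
  \<open>P\<^bsub>Y\<^sub>i|\<Omega>\<^sub>i\<^esub> P\<^bsub>\<Omega> Z|W\<^esub>\<close>.  Given \<open>\<Omega>\<close> the \<open>Y\<^sub>i\<close> are again independent, and \<open>Z\<close> takes at most
  \<open>|A|\<^sup>n\<^sup>-\<^sup>m\<close> values, so Raz's lemma and Pinsker bound these by \<open>ln (|A|\<^sup>n\<^sup>-\<^sup>m / P W)\<close>.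
  Cauchy-Schwarz over \<open>i\<close> gives \<open>3 k \<surd>\<delta>\<close>.\<close>

section \<open>Elementary inequalities\<close>

lemma pinsker_aux_mono:
  fixes a b :: real
  assumes "0 < a" "a \<le> b"
  shows "(a + 1) * ln a - 2 * (a - 1) \<le> (b + 1) * ln b - 2 * (b - 1)"
proof (rule DERIV_nonneg_imp_nondecreasing[OF assms(2)])
  fix x assume x: "a \<le> x" "x \<le> b"
  hence xp: "x > 0" using assms by linarith
  show "\<exists>y. ((\<lambda>x. (x + 1) * ln x - 2 * (x - 1)) has_real_derivative y) (at x) \<and> 0 \<le> y"
  proof (intro exI conjI)
    show "((\<lambda>x. (x + 1) * ln x - 2 * (x - 1)) has_real_derivative (ln x + (x + 1) / x - 2)) (at x)"
      using xp by (auto intro!: derivative_eq_intros simp: field_simps)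
    have "ln (1 / x) \<le> 1 / x - 1" using ln_le_minus_one[of "1 / x"] xp by simp
    hence "- ln x \<le> 1 / x - 1" using xp by (simp add: ln_div)
    moreover have "(x + 1) / x = 1 + 1 / x" using xp by (simp add: field_simps)
    ultimately show "0 \<le> ln x + (x + 1) / x - 2" by linarith
  qed
qed

text \<open>The quadratic lower bound on \<open>x ln x - x + 1\<close> behind Pinsker's inequality; the function
  \<open>2 (x + 2) (x ln x - x + 1) - 3 (x - 1)\<^sup>2\<close> has its minimum \<open>0\<close> at \<open>x = 1\<close>.\<close>

lemma pinsker_scalar_ratio:
  fixes x :: real
  assumes "x > 0"
  shows "3 * (x - 1)\<^sup>2 \<le> 2 * (x + 2) * (x * ln x - x + 1)"
proof -
  define g where "g = (\<lambda>x::real. 2 * (x + 2) * (x * ln x - x + 1) - 3 * (x - 1)\<^sup>2)"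
  have der: "(g has_real_derivative 4 * ((x + 1) * ln x - 2 * (x - 1))) (at x)" if "x > 0" for x
    unfolding g_def using that
    by (auto intro!: derivative_eq_intros simp: field_simps power2_eq_square)
  have "g 1 \<le> g x"
  proof (cases "x \<le> 1")
    case True
    show ?thesis
    proof (rule DERIV_nonpos_imp_nonincreasing[of x 1 g, OF True])
      fix y assume y: "x \<le> y" "y \<le> 1"
      hence yp: "y > 0" using assms by linarith
      have "(y + 1) * ln y - 2 * (y - 1) \<le> (1 + 1) * ln 1 - 2 * (1 - 1)"
        using pinsker_aux_mono[OF yp y(2)] .
      thus "\<exists>d. (g has_real_derivative d) (at y) \<and> d \<le> 0"
        using der[OF yp] by (intro exI[of _ "4 * ((y + 1) * ln y - 2 * (y - 1))"]) auto
    qed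
  next
    case False
    show ?thesis
    proof (rule DERIV_nonneg_imp_nondecreasing[of 1 x g])
      show "1 \<le> x" using False by simp
      fix y assume y: "1 \<le> y" "y \<le> x"
      hence yp: "y > 0" by linarith
      have "(1 + 1) * ln 1 - 2 * (1 - 1) \<le> (y + 1) * ln y - 2 * (y - 1)"
        using pinsker_aux_mono[of 1 y] y by simp
      thus "\<exists>d. (g has_real_derivative d) (at y) \<and> 0 \<le> d"
        using der[OF yp] by (intro exI[of _ "4 * ((y + 1) * ln y - 2 * (y - 1))"]) auto
    qed
  qed
  thus ?thesis by (simp add: g_def)
qed

lemma pinsker_scalar:
  fixes p q :: real
  assumes "p \<ge> 0" "q > 0"
  shows "3 * (p - q)\<^sup>2 \<le> 2 * (p + 2 * q) * (p * ln (p / q) - p + q)"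
proof (cases "p = 0")
  case True thus ?thesis using assms by (simp add: power2_eq_square)
next
  case False
  hence "p / q > 0" using assms by simp
  hence "3 * (p / q - 1)\<^sup>2 \<le> 2 * (p / q + 2) * (p / q * ln (p / q) - p / q + 1)"
    by (rule pinsker_scalar_ratio)
  hence "q\<^sup>2 * (3 * (p / q - 1)\<^sup>2) \<le> q\<^sup>2 * (2 * (p / q + 2) * (p / q * ln (p / q) - p / q + 1))"
    by (intro mult_left_mono) auto
  moreover have "q\<^sup>2 * (3 * (p / q - 1)\<^sup>2) = 3 * (p - q)\<^sup>2"
    using assms by (simp add: field_simps power2_eq_square)
  moreover have "q\<^sup>2 * (2 * (p / q + 2) * (p / q * ln (p / q) - p / q + 1))
      = 2 * (p + 2 * q) * (p * ln (p / q) - p + q)"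
    using assms by (simp add: field_simps power2_eq_square)
  ultimately show ?thesis by simp
qed

text \<open>Cauchy-Schwarz with the weights \<open>p + 2 q\<close> reduces Pinsker's inequality to the scalar case.\<close>

lemma pinsker_finite:
  fixes p q :: "'v \<Rightarrow> real"
  assumes T: "finite T" and p0: "\<And>v. v \<in> T \<Longrightarrow> p v \<ge> 0" and q0: "\<And>v. v \<in> T \<Longrightarrow> q v \<ge> 0"
    and p1: "(\<Sum>v\<in>T. p v) = 1" and q1: "(\<Sum>v\<in>T. q v) \<le> 1"
    and pq: "\<And>v. v \<in> T \<Longrightarrow> p v > 0 \<Longrightarrow> q v > 0"
  shows "(\<Sum>v\<in>T. \<bar>p v - q v\<bar>)\<^sup>2 \<le> 2 * (\<Sum>v\<in>T. p v * ln (p v / q v))"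
proof -
  define a where "a v = sqrt (p v + 2 * q v)" for v
  define b where "b v = (if p v + 2 * q v = 0 then 0 else \<bar>p v - q v\<bar> / sqrt (p v + 2 * q v))" for v
  define d where "d v = p v * ln (p v / q v) - p v + q v" for v
  have ab: "\<bar>p v - q v\<bar> = a v * b v" if "v \<in> T" for v
    using p0[OF that] q0[OF that] by (cases "p v + 2 * q v = 0") (auto simp: a_def b_def)
  have b2: "(b v)\<^sup>2 \<le> 2 / 3 * d v" if v: "v \<in> T" for v
  proof (cases "q v = 0")
    case True
    hence "p v = 0" using pq[OF v] p0[OF v] by (auto simp: less_le)
    thus ?thesis using True by (simp add: b_def d_def)
  next
    case False
    hence qp: "q v > 0" using q0[OF v] by (simp add: less_le)
    have s: "p v + 2 * q v > 0" using p0[OF v] qp by linarith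
    have "3 * (p v - q v)\<^sup>2 \<le> 2 * (p v + 2 * q v) * d v"
      unfolding d_def using pinsker_scalar[OF p0[OF v] qp] .
    hence "(p v - q v)\<^sup>2 / (p v + 2 * q v) \<le> 2 / 3 * d v"
      using s by (simp add: divide_le_eq field_simps)
    thus ?thesis using s by (simp add: b_def power_divide)
  qed
  have "(\<Sum>v\<in>T. \<bar>p v - q v\<bar>)\<^sup>2 = (\<Sum>v\<in>T. a v * b v)\<^sup>2" using ab by simp
  also have "\<dots> \<le> (\<Sum>v\<in>T. (a v)\<^sup>2) * (\<Sum>v\<in>T. (b v)\<^sup>2)" by (rule Cauchy_Schwarz_ineq_sum)
  also have "\<dots> \<le> 3 * (2 / 3 * (\<Sum>v\<in>T. d v))"
  proof (rule mult_mono)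
    have "(\<Sum>v\<in>T. (a v)\<^sup>2) = (\<Sum>v\<in>T. p v) + 2 * (\<Sum>v\<in>T. q v)"
      using p0 q0 by (simp add: a_def sum.distrib sum_distrib_left)
    thus "(\<Sum>v\<in>T. (a v)\<^sup>2) \<le> 3" using p1 q1 by simp
    show "(\<Sum>v\<in>T. (b v)\<^sup>2) \<le> 2 / 3 * (\<Sum>v\<in>T. d v)"
      unfolding sum_distrib_left using b2 by (rule sum_mono)
  qed (auto intro: sum_nonneg)
  also have "(\<Sum>v\<in>T. d v) = (\<Sum>v\<in>T. p v * ln (p v / q v)) - (\<Sum>v\<in>T. p v) + (\<Sum>v\<in>T. q v)"
    by (simp add: d_def sum.distrib sum_subtractf)
  finally show ?thesis using p1 q1 by simp
qed

lemma jensen_ln_le: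
  fixes q a :: "'w \<Rightarrow> real"
  assumes S: "finite S" and q0: "\<And>w. w \<in> S \<Longrightarrow> q w \<ge> 0" and q1: "(\<Sum>w\<in>S. q w) = 1"
    and ap: "\<And>w. w \<in> S \<Longrightarrow> q w > 0 \<Longrightarrow> a w > 0"
    and le: "(\<Sum>w\<in>S. q w * a w) \<le> M"
  shows "(\<Sum>w\<in>S. q w * ln (a w)) \<le> ln M"
proof -
  define E where "E = (\<Sum>w\<in>S. q w * a w)"
  have nn: "q w * a w \<ge> 0" if "w \<in> S" for w
    using q0[OF that] ap[OF that] by (cases "q w = 0") (auto simp: less_le)
  obtain w0 where w0: "w0 \<in> S" "q w0 > 0"
    using q1 q0 by (metis less_eq_real_def sum.neutral zero_neq_one)
  have "E \<ge> q w0 * a w0" unfolding E_def using nn w0 S by (intro member_le_sum) auto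
  moreover have "q w0 * a w0 > 0" using w0 ap by auto
  ultimately have Ep: "E > 0" by linarith
  have "q w * ln (a w) \<le> q w * (ln E + a w / E - 1)" if "w \<in> S" for w
  proof (cases "q w = 0")
    case False
    hence qp: "q w > 0" using q0 that by (simp add: less_le)
    have apw: "a w > 0" using ap that qp by auto
    have "ln (a w / E) \<le> a w / E - 1" using ln_le_minus_one apw Ep by simp
    hence "ln (a w) \<le> ln E + a w / E - 1" using apw Ep by (simp add: ln_div)
    thus ?thesis using qp by (intro mult_left_mono) auto
  qed simp
  hence "(\<Sum>w\<in>S. q w * ln (a w)) \<le> (\<Sum>w\<in>S. q w * (ln E + a w / E - 1))" by (rule sum_mono)
  also have "\<dots> = ln E * (\<Sum>w\<in>S. q w) + (\<Sum>w\<in>S. q w * a w) / E - (\<Sum>w\<in>S. q w)"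
    by (simp add: algebra_simps sum.distrib sum_subtractf sum_distrib_left sum_divide_distrib)
  also have "\<dots> = ln E" using q1 Ep by (simp add: E_def)
  also have "\<dots> \<le> ln M" using Ep le by (simp add: E_def)
  finally show ?thesis .
qed

lemma sum_ln_ratio_split:
  fixes a c :: "'i \<Rightarrow> real"
  assumes "finite I" "\<And>i. a i > 0" "b > 0" "\<And>i. c i > 0" "e > 0"
  shows "(\<Sum>i\<in>I. ln (a i / (c i * b))) = ln (b * (\<Prod>i\<in>I. a i / b) / e) + ln (e / (b * (\<Prod>i\<in>I. c i)))"
proof -
  have "(\<Sum>i\<in>I. ln (a i / (c i * b))) = ln (\<Prod>i\<in>I. a i / (c i * b))"
    using assms by (intro ln_prod[symmetric]) (auto simp: less_imp_neq[symmetric])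
  also have "(\<Prod>i\<in>I. a i / (c i * b)) = (b * (\<Prod>i\<in>I. a i / b) / e) * (e / (b * (\<Prod>i\<in>I. c i)))"
    using assms by (simp add: prod_dividef[symmetric] field_simps)
  also have "ln \<dots> = ln (b * (\<Prod>i\<in>I. a i / b) / e) + ln (e / (b * (\<Prod>i\<in>I. c i)))"
    using assms by (intro ln_mult_pos divide_pos_pos mult_pos_pos prod_pos) auto
  finally show ?thesis .
qed

lemma sum_sqrt_le_sqrt_card_sum:
  fixes a :: "'i \<Rightarrow> real"
  assumes "finite I" "\<And>i. i \<in> I \<Longrightarrow> a i \<ge> 0"
  shows "(\<Sum>i\<in>I. sqrt (a i)) \<le> sqrt (real (card I) * (\<Sum>i\<in>I. a i))"
proof (rule real_le_rsqrt)
  have "(\<Sum>i\<in>I. 1 * sqrt (a i))\<^sup>2 \<le> (\<Sum>i\<in>I. 1\<^sup>2) * (\<Sum>i\<in>I. (sqrt (a i))\<^sup>2)"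
    by (rule Cauchy_Schwarz_ineq_sum)
  also have "(\<Sum>i\<in>I. (sqrt (a i))\<^sup>2) = (\<Sum>i\<in>I. a i)" using assms by (intro sum.cong) auto
  finally show "(\<Sum>i\<in>I. sqrt (a i))\<^sup>2 \<le> real (card I) * (\<Sum>i\<in>I. a i)" by simp
qed

lemma sum_sqrt_double_le:
  fixes a :: "'i \<Rightarrow> real"
  assumes "finite I" "\<And>i. i \<in> I \<Longrightarrow> a i \<ge> 0" "(\<Sum>i\<in>I. a i) \<le> \<Lambda>"
  shows "(\<Sum>i\<in>I. sqrt (2 * a i)) \<le> sqrt (real (card I) * (2 * \<Lambda>))"
proof -
  have "(\<Sum>i\<in>I. sqrt (2 * a i)) \<le> sqrt (real (card I) * (\<Sum>i\<in>I. 2 * a i))"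
    using assms(1,2) by (intro sum_sqrt_le_sqrt_card_sum) auto
  also have "\<dots> \<le> sqrt (real (card I) * (2 * \<Lambda>))"
    using assms(3) by (intro real_sqrt_le_mono mult_left_mono) (auto simp: sum_distrib_left[symmetric])
  finally show ?thesis .
qed

lemma sqrt_bound_div_ln2:
  fixes k m \<Lambda> T :: real
  assumes "\<Lambda> \<ge> 0" "m > 0" "k \<ge> 0" "T \<le> 3 / 2 * k * sqrt (m * (2 * \<Lambda>))"
  shows "T / m \<le> 3 * k * sqrt (\<Lambda> / ln 2 / m)"
proof -
  have "sqrt (m * (2 * \<Lambda>)) = sqrt ((2 * m)\<^sup>2 * (\<Lambda> / (2 * m)))"
    using assms(2) by (simp add: field_simps power2_eq_square)
  also have "\<dots> = 2 * m * sqrt (\<Lambda> / (2 * m))"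
    using assms(2) by (simp only: real_sqrt_mult real_sqrt_abs abs_of_pos)
  finally have "sqrt (m * (2 * \<Lambda>)) = 2 * m * sqrt (\<Lambda> / (2 * m))" .
  hence "T / m \<le> 3 * k * sqrt (\<Lambda> / (2 * m))"
    using assms(2,4) by (simp add: divide_le_eq field_simps)
  also have "\<dots> \<le> 3 * k * sqrt (\<Lambda> / ln 2 / m)"
  proof (intro mult_left_mono real_sqrt_le_mono)
    have "ln (2::real) \<le> 2" using ln_le_minus_one[of 2] by simp
    thus "\<Lambda> / (2 * m) \<le> \<Lambda> / ln 2 / m"
      using assms(1,2) by (simp add: field_simps mult_left_mono)
  qed (use assms(3) in auto)
  finally show ?thesis .
qed

section \<open>Conditioning a finite distribution on an event\<close>

definition pmf_given :: "'w pmf \<Rightarrow> 'w set \<Rightarrow> 'w \<Rightarrow> real" where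
  "pmf_given P W w = (if w \<in> W then pmf P w / prb P W else 0)"

definition prob_given :: "'w pmf \<Rightarrow> 'w set \<Rightarrow> 'w set \<Rightarrow> real" where
  "prob_given P W A = prb P (A \<inter> W) / prb P W"

lemma pmf_given_nonneg [simp]: "pmf_given P W w \<ge> 0"
  by (simp add: pmf_given_def)

lemma prob_given_nonneg [simp]: "prob_given P W A \<ge> 0"
  by (simp add: prob_given_def)

lemma prob_given_UNIV: "prb P W > 0 \<Longrightarrow> prob_given P W UNIV = 1"
  by (simp add: prob_given_def)

lemma prob_given_pos:
  assumes "w \<in> set_pmf P" "w \<in> A" "w \<in> W" "prb P W > 0"
  shows "prob_given P W A > 0"
  using assms measure_pmf_posI[of w P "A \<inter> W"] by (simp add: prob_given_def)

lemma prob_finite_sum: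
  assumes "finite (set_pmf P)"
  shows "prb P A = (\<Sum>w\<in>set_pmf P. if w \<in> A then pmf P w else 0)"
proof -
  have "prb P A = prb P (A \<inter> set_pmf P)" by (simp add: measure_Int_set_pmf)
  also have "\<dots> = sum (pmf P) (A \<inter> set_pmf P)"
    using assms by (intro measure_measure_pmf_finite) auto
  also have "\<dots> = (\<Sum>w\<in>set_pmf P. if w \<in> A then pmf P w else 0)"
    using assms by (subst Int_commute) (rule sum.inter_restrict)
  finally show ?thesis .
qed

lemma sum_pmf_given_indicator:
  assumes "finite (set_pmf P)"
  shows "(\<Sum>w\<in>set_pmf P. pmf_given P W w * (if w \<in> A then 1 else 0)) = prob_given P W A"
proof -
  have "(\<Sum>w\<in>set_pmf P. pmf_given P W w * (if w \<in> A then 1 else 0))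
      = (\<Sum>w\<in>set_pmf P. (if w \<in> A \<inter> W then pmf P w else 0)) / prb P W"
    by (auto simp add: sum_divide_distrib pmf_given_def intro!: sum.cong)
  thus ?thesis using prob_finite_sum[OF assms, of "A \<inter> W"] by (simp add: prob_given_def)
qed

lemma sum_pmf_given:
  assumes "finite (set_pmf P)" "prb P W > 0"
  shows "(\<Sum>w\<in>set_pmf P. pmf_given P W w) = 1"
  using sum_pmf_given_indicator[OF assms(1), of W UNIV] prob_given_UNIV[OF assms(2)] by simp

lemma pmf_given_pos_imp_mem: "pmf_given P W w > 0 \<Longrightarrow> w \<in> W"
  by (auto simp: pmf_given_def split: if_splits)

lemma sum_pmf_given_by_fibres:
  assumes "finite (set_pmf P)"
  shows "(\<Sum>w\<in>set_pmf P. pmf_given P W w * F (V w))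
       = (\<Sum>v\<in>V ` set_pmf P. prob_given P W {w. V w = v} * F v)"
proof -
  have "(\<Sum>w\<in>set_pmf P. pmf_given P W w * F (V w))
      = (\<Sum>v\<in>V ` set_pmf P. \<Sum>w\<in>{w \<in> set_pmf P. V w = v}. pmf_given P W w * F (V w))"
    using assms by (rule sum.image_gen)
  also have "\<dots> = (\<Sum>v\<in>V ` set_pmf P. prob_given P W {w. V w = v} * F v)"
  proof (rule sum.cong[OF refl])
    fix v
    have "(\<Sum>w\<in>{w \<in> set_pmf P. V w = v}. pmf_given P W w * F (V w))
        = (\<Sum>w\<in>set_pmf P. pmf_given P W w * (if w \<in> {w. V w = v} then 1 else 0)) * F v"
      using assms by (simp add: sum_distrib_right sum.inter_filter[symmetric] if_distrib cong: if_cong)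
    thus "(\<Sum>w\<in>{w \<in> set_pmf P. V w = v}. pmf_given P W w * F (V w)) = prob_given P W {w. V w = v} * F v"
      using sum_pmf_given_indicator[OF assms, of W "{w. V w = v}"] by simp
  qed
  finally show ?thesis .
qed

lemma sum_prob_fibres:
  assumes "finite (set_pmf P)" "finite Vs" "V ` set_pmf P \<subseteq> Vs"
  shows "(\<Sum>v\<in>Vs. prb P {w. V w = v \<and> w \<in> E}) = prb P E"
proof -
  have "(\<Sum>v\<in>Vs. prb P {w. V w = v \<and> w \<in> E})
      = (\<Sum>v\<in>Vs. \<Sum>w\<in>set_pmf P. if V w = v \<and> w \<in> E then pmf P w else 0)"
    using prob_finite_sum[OF assms(1)] by simp
  also have "\<dots> = (\<Sum>w\<in>set_pmf P. \<Sum>v\<in>Vs. if V w = v \<and> w \<in> E then pmf P w else 0)"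
    by (rule sum.swap)
  also have "\<dots> = (\<Sum>w\<in>set_pmf P. if w \<in> E then pmf P w else 0)"
  proof (rule sum.cong[OF refl])
    fix w assume "w \<in> set_pmf P"
    hence "V w \<in> Vs" using assms(3) by auto
    thus "(\<Sum>v\<in>Vs. if V w = v \<and> w \<in> E then pmf P w else 0) = (if w \<in> E then pmf P w else 0)"
      using assms(2) by (auto simp: sum.delta)
  qed
  also have "\<dots> = prb P E" using prob_finite_sum[OF assms(1)] by simp
  finally show ?thesis .
qed

lemma sum_prob_fibres_le:
  assumes "finite (set_pmf P)" "finite Vs"
  shows "(\<Sum>v\<in>Vs. prb P {w. V w = v \<and> w \<in> E}) \<le> prb P E"
proof -
  have "(\<Sum>v\<in>Vs. prb P {w. V w = v \<and> w \<in> E}) \<le> (\<Sum>v\<in>Vs \<union> V ` set_pmf P. prb P {w. V w = v \<and> w \<in> E})"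
    using assms by (intro sum_mono2) auto
  also have "\<dots> = prb P E" using assms by (intro sum_prob_fibres) auto
  finally show ?thesis .
qed

lemma sum_prob_given_fibres:
  assumes "finite (set_pmf P)" "finite Vs" "V ` set_pmf P \<subseteq> Vs"
  shows "(\<Sum>v\<in>Vs. prob_given P W {w. V w = v \<and> w \<in> E}) = prob_given P W E"
proof -
  have "(\<Sum>v\<in>Vs. prob_given P W {w. V w = v \<and> w \<in> E})
      = (\<Sum>v\<in>Vs. prb P {w. V w = v \<and> w \<in> E \<inter> W}) / prb P W"
    by (simp add: prob_given_def sum_divide_distrib Int_def conj_assoc)
  also have "\<dots> = prob_given P W E"
    using sum_prob_fibres[OF assms, of "E \<inter> W"] by (simp add: prob_given_def)
  finally show ?thesis .
qed

lemma sum_prob_fibres_compose: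
  assumes "finite (set_pmf P)" "finite Ys" "Y ` set_pmf P \<subseteq> Ys"
  shows "(\<Sum>y\<in>{y\<in>Ys. h y = u}. prb P {w. Y w = y \<and> w \<in> E}) = prb P {w. h (Y w) = u \<and> w \<in> E}"
proof -
  have "(\<Sum>y\<in>{y\<in>Ys. h y = u}. prb P {w. Y w = y \<and> w \<in> E})
      = (\<Sum>y\<in>Ys. if h y = u then prb P {w. Y w = y \<and> w \<in> E} else 0)"
    using assms(2) by (rule sum.inter_filter)
  also have "\<dots> = (\<Sum>y\<in>Ys. prb P {w. Y w = y \<and> w \<in> {w. h (Y w) = u \<and> w \<in> E}})"
  proof (intro sum.cong refl)
    fix y
    show "(if h y = u then prb P {w. Y w = y \<and> w \<in> E} else 0)
        = prb P {w. Y w = y \<and> w \<in> {w. h (Y w) = u \<and> w \<in> E}}"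
    proof (cases "h y = u")
      case False
      hence "{w. Y w = y \<and> w \<in> {w. h (Y w) = u \<and> w \<in> E}} = {}" by auto
      thus ?thesis using False by (simp only: measure_empty if_False)
    qed (auto intro: arg_cong[where f = "prb P"])
  qed
  also have "\<dots> = prb P {w. h (Y w) = u \<and> w \<in> E}"
    using sum_prob_fibres[OF assms, of "{w. h (Y w) = u \<and> w \<in> E}"] by simp
  finally show ?thesis .
qed

lemma sum_pmf_given_log_ratio:
  assumes "finite (set_pmf P)" "finite T" "V ` set_pmf P \<subseteq> T"
  shows "(\<Sum>w\<in>set_pmf P. pmf_given P W w * ln (prob_given P W {w'. V w' = V w} / Ref (V w)))
       = (\<Sum>v\<in>T. prob_given P W {w. V w = v} * ln (prob_given P W {w. V w = v} / Ref v))"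
proof -
  have "(\<Sum>w\<in>set_pmf P. pmf_given P W w * ln (prob_given P W {w'. V w' = V w} / Ref (V w)))
      = (\<Sum>v\<in>V ` set_pmf P. prob_given P W {w. V w = v} * ln (prob_given P W {w. V w = v} / Ref v))"
    using sum_pmf_given_by_fibres[OF assms(1), where F = "\<lambda>v. ln (prob_given P W {w. V w = v} / Ref v)"]
    by simp
  also have "\<dots> = (\<Sum>v\<in>T. prob_given P W {w. V w = v} * ln (prob_given P W {w. V w = v} / Ref v))"
  proof (rule sum.mono_neutral_left[OF assms(2,3)], intro ballI)
    fix v assume "v \<in> T - V ` set_pmf P"
    hence "set_pmf P \<inter> ({w. V w = v} \<inter> W) = {}" by auto
    hence "prob_given P W {w. V w = v} = 0" by (simp add: prob_given_def measure_pmf_zero_iff)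
    thus "prob_given P W {w. V w = v} * ln (prob_given P W {w. V w = v} / Ref v) = 0" by simp
  qed
  finally show ?thesis .
qed

lemma pinsker_given:
  assumes fin: "finite (set_pmf P)" and pW: "prb P W > 0"
    and T: "finite T" "V ` set_pmf P \<subseteq> T"
    and Ref0: "\<And>v. v \<in> T \<Longrightarrow> Ref v \<ge> 0" and Ref1: "(\<Sum>v\<in>T. Ref v) \<le> 1"
    and Ref_pos: "\<And>v. v \<in> T \<Longrightarrow> prob_given P W {w. V w = v} > 0 \<Longrightarrow> Ref v > 0"
  shows "(\<Sum>v\<in>T. \<bar>prob_given P W {w. V w = v} - Ref v\<bar>)
       \<le> sqrt (2 * (\<Sum>w\<in>set_pmf P. pmf_given P W w * ln (prob_given P W {w'. V w' = V w} / Ref (V w))))"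
proof (rule real_le_rsqrt)
  have "(\<Sum>v\<in>T. prob_given P W {w. V w = v \<and> w \<in> UNIV}) = 1"
    using sum_prob_given_fibres[OF fin T, of W UNIV] prob_given_UNIV[OF pW] by simp
  thus "(\<Sum>v\<in>T. \<bar>prob_given P W {w. V w = v} - Ref v\<bar>)\<^sup>2
      \<le> 2 * (\<Sum>w\<in>set_pmf P. pmf_given P W w * ln (prob_given P W {w'. V w' = V w} / Ref (V w)))"
    unfolding sum_pmf_given_log_ratio[OF fin T]
    using Ref0 Ref1 Ref_pos by (intro pinsker_finite T) auto
qed

section \<open>Raz's lemma\<close>

lemma sum_pmf_given_product_ratio_le_1:
  fixes X :: "'i \<Rightarrow> 'w \<Rightarrow> 'x" and U :: "'w \<Rightarrow> 'u"
  assumes fin: "finite (set_pmf P)" and finI: "finite I" and pW: "prb P W > 0"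
  shows "(\<Sum>w\<in>set_pmf P. pmf_given P W w *
           (prob_given P W {w'. U w' = U w}
            * (\<Prod>i\<in>I. prob_given P W {w'. X i w' = X i w \<and> U w' = U w} / prob_given P W {w'. U w' = U w})
            / prob_given P W {w'. (\<forall>i\<in>I. X i w' = X i w) \<and> U w' = U w})) \<le> 1"
proof -
  define S where "S = set_pmf P"
  define V where "V w = (restrict (\<lambda>i. X i w) I, U w)" for w
  define a where "a i x u = prob_given P W {w'. X i w' = x \<and> U w' = u}" for i x u
  define b where "b u = prob_given P W {w'. U w' = u}" for u
  define \<Psi> where "\<Psi> v = b (snd v) * (\<Prod>i\<in>I. a i (fst v i) (snd v) / b (snd v))" for v
  have finS: "finite S" using fin by (simp add: S_def)
  have \<Psi>0: "\<Psi> v \<ge> 0" for v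
    unfolding \<Psi>_def a_def b_def by (intro mult_nonneg_nonneg prod_nonneg divide_nonneg_nonneg) auto
  have Vw: "{w'. (\<forall>i\<in>I. X i w' = X i w) \<and> U w' = U w} = {w'. V w' = V w}" for w
    by (auto simp: V_def restrict_def fun_eq_iff)
  have "(\<Sum>w\<in>S. pmf_given P W w * (b (U w) * (\<Prod>i\<in>I. a i (X i w) (U w) / b (U w))
          / prob_given P W {w'. V w' = V w}))
      = (\<Sum>v\<in>V ` S. prob_given P W {w. V w = v} * (\<Psi> v / prob_given P W {w. V w = v}))"
    unfolding S_def
    using sum_pmf_given_by_fibres[OF fin, where F = "\<lambda>v. \<Psi> v / prob_given P W {w. V w = v}" and V = V]
    by (simp add: \<Psi>_def V_def)
  also have "\<dots> \<le> (\<Sum>v\<in>V ` S. \<Psi> v)"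
    using \<Psi>0 by (intro sum_mono) (simp add: divide_le_eq_1)
  also have "\<dots> \<le> (\<Sum>v\<in>PiE I (\<lambda>i. X i ` S) \<times> U ` S. \<Psi> v)"
    using finS finI \<Psi>0 by (intro sum_mono2) (auto simp: V_def finite_PiE)
  also have "\<dots> = (\<Sum>u\<in>U ` S. \<Sum>x\<in>PiE I (\<lambda>i. X i ` S). \<Psi> (x, u))"
    unfolding sum.cartesian_product' by (rule sum.swap)
  also have "\<dots> \<le> (\<Sum>u\<in>U ` S. b u)"
  proof (rule sum_mono)
    fix u
    have "(\<Sum>x\<in>PiE I (\<lambda>i. X i ` S). \<Psi> (x, u))
        = b u * (\<Prod>i\<in>I. \<Sum>x0\<in>X i ` S. a i x0 u / b u)"
      using finI finS by (simp add: \<Psi>_def sum_distrib_left prod_sum_PiE)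
    also have "\<dots> \<le> b u"
    proof (rule mult_left_le)
      show "(\<Prod>i\<in>I. \<Sum>x0\<in>X i ` S. a i x0 u / b u) \<le> 1"
      proof (rule prod_le_1)
        fix i
        have "(\<Sum>x0\<in>X i ` S. a i x0 u) = b u"
          using sum_prob_given_fibres[OF fin, of "X i ` S" "X i" W "{w'. U w' = u}"] finS
          by (simp add: a_def b_def S_def)
        hence "(\<Sum>x0\<in>X i ` S. a i x0 u / b u) = (if b u = 0 then 0 else 1)"
          by (simp add: sum_divide_distrib[symmetric])
        thus "0 \<le> (\<Sum>x0\<in>X i ` S. a i x0 u / b u) \<and> (\<Sum>x0\<in>X i ` S. a i x0 u / b u) \<le> 1"
          by simp
      qed
    qed (simp add: b_def)
    finally show "(\<Sum>x\<in>PiE I (\<lambda>i. X i ` S). \<Psi> (x, u)) \<le> b u" .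
  qed
  also have "\<dots> = 1"
    using sum_prob_given_fibres[OF fin, of "U ` S" U W UNIV] finS prob_given_UNIV[OF pW]
    by (simp add: b_def S_def)
  finally show ?thesis by (simp add: S_def Vw a_def b_def)
qed

text \<open>The first half of Raz's lemma: by Jensen's inequality, a relative entropy is nonnegative.\<close>

lemma raz_product_term:
  fixes X :: "'i \<Rightarrow> 'w \<Rightarrow> 'x" and U :: "'w \<Rightarrow> 'u"
  assumes fin: "finite (set_pmf P)" and finI: "finite I" and pW: "prb P W > 0"
  shows "(\<Sum>w\<in>set_pmf P. pmf_given P W w *
           ln (prob_given P W {w'. U w' = U w}
            * (\<Prod>i\<in>I. prob_given P W {w'. X i w' = X i w \<and> U w' = U w} / prob_given P W {w'. U w' = U w})
            / prob_given P W {w'. (\<forall>i\<in>I. X i w' = X i w) \<and> U w' = U w})) \<le> 0"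
proof -
  have "(\<Sum>w\<in>set_pmf P. pmf_given P W w *
           ln (prob_given P W {w'. U w' = U w}
            * (\<Prod>i\<in>I. prob_given P W {w'. X i w' = X i w \<and> U w' = U w} / prob_given P W {w'. U w' = U w})
            / prob_given P W {w'. (\<forall>i\<in>I. X i w' = X i w) \<and> U w' = U w})) \<le> ln 1"
  proof (rule jensen_ln_le[OF fin _ sum_pmf_given[OF fin pW] _
        sum_pmf_given_product_ratio_le_1[OF fin finI pW]])
    fix w assume w: "w \<in> set_pmf P" "pmf_given P W w > 0"
    have "w \<in> W" using w(2) by (rule pmf_given_pos_imp_mem)
    with w pW show "0 < prob_given P W {w'. U w' = U w}
            * (\<Prod>i\<in>I. prob_given P W {w'. X i w' = X i w \<and> U w' = U w} / prob_given P W {w'. U w' = U w})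
            / prob_given P W {w'. (\<forall>i\<in>I. X i w' = X i w) \<and> U w' = U w}"
      by (intro divide_pos_pos mult_pos_pos prod_pos ballI prob_given_pos[OF w(1)]) auto
  qed simp
  thus ?thesis by simp
qed

lemma sum_pmf_given_marginal_ratio_le:
  fixes G :: "'w \<Rightarrow> 'g" and Z :: "'w \<Rightarrow> 'z"
  assumes fin: "finite (set_pmf P)" and pW: "prb P W > 0"
    and N: "real (card (Z ` (set_pmf P \<inter> W))) \<le> N"
  shows "(\<Sum>w\<in>set_pmf P. pmf_given P W w *
           (prb P {w'. G w' = G w} / (prb P W * prob_given P W {w'. G w' = G w \<and> Z w' = Z w})))
       \<le> N / prb P W"
proof -
  define S where "S = set_pmf P"
  define pw where "pw = prb P W"
  define U where "U w = (G w, Z w)" for w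
  define g where "g u = prb P {w'. G w' = fst u}" for u :: "'g \<times> 'z"
  define b where "b u = prob_given P W {w'. U w' = u}" for u
  have finS: "finite S" using fin by (simp add: S_def)
  have "(\<Sum>w\<in>S. pmf_given P W w *
          (prb P {w'. G w' = G w} / (pw * prob_given P W {w'. G w' = G w \<and> Z w' = Z w})))
      = (\<Sum>u\<in>U ` S. b u * (g u / (pw * b u)))"
    unfolding S_def using sum_pmf_given_by_fibres[OF fin, where F = "\<lambda>u. g u / (pw * b u)" and V = U]
    by (simp add: g_def b_def U_def)
  also have "\<dots> = (\<Sum>u\<in>{u\<in>U ` S. b u \<noteq> 0}. g u / pw)"
    using finS by (subst sum.inter_filter) (auto intro!: sum.cong)
  also have "\<dots> \<le> (\<Sum>u\<in>G ` S \<times> Z ` (S \<inter> W). g u / pw)"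
  proof (rule sum_mono2)
    show "finite (G ` S \<times> Z ` (S \<inter> W))" using finS by auto
    show "{u \<in> U ` S. b u \<noteq> 0} \<subseteq> G ` S \<times> Z ` (S \<inter> W)"
    proof
      fix u assume "u \<in> {u \<in> U ` S. b u \<noteq> 0}"
      hence "prb P ({w'. U w' = u} \<inter> W) \<noteq> 0" by (simp add: b_def prob_given_def)
      hence "set_pmf P \<inter> ({w'. U w' = u} \<inter> W) \<noteq> {}" by (simp add: measure_pmf_zero_iff)
      then obtain w' where "w' \<in> S" "U w' = u" "w' \<in> W" by (auto simp: S_def)
      thus "u \<in> G ` S \<times> Z ` (S \<inter> W)" by (auto simp: U_def)
    qed
  qed (simp add: g_def pw_def)
  also have "\<dots> = (\<Sum>\<gamma>\<in>G ` S. \<Sum>z\<in>Z ` (S \<inter> W). prb P {w'. G w' = \<gamma> \<and> w' \<in> UNIV} / pw)"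
    by (simp add: sum.cartesian_product' g_def)
  also have "\<dots> = real (card (Z ` (S \<inter> W))) * (\<Sum>\<gamma>\<in>G ` S. prb P {w'. G w' = \<gamma> \<and> w' \<in> UNIV}) / pw"
    by (simp add: sum_distrib_left sum_divide_distrib)
  also have "(\<Sum>\<gamma>\<in>G ` S. prb P {w'. G w' = \<gamma> \<and> w' \<in> UNIV}) = 1"
    using sum_prob_fibres[OF fin, of "G ` S" G UNIV] finS by (simp add: S_def)
  also have "real (card (Z ` (S \<inter> W))) * 1 / pw \<le> N / pw"
    using N pW by (simp add: S_def pw_def divide_right_mono)
  finally show ?thesis by (simp add: S_def pw_def)
qed

text \<open>The hypothesis \<open>CI\<close> says that the \<open>X i\<close> are independent
  given \<open>G\<close>, each depending on \<open>G\<close> only through \<open>Gm i\<close>; conditioning on \<open>W\<close> and \<open>Z\<close> costs at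
  most \<open>ln (N / P W)\<close> when \<open>Z\<close> takes at most \<open>N\<close> values on \<open>W\<close>.\<close>

lemma raz_correlation_term:
  fixes X :: "'i \<Rightarrow> 'w \<Rightarrow> 'x" and Gm :: "'i \<Rightarrow> 'w \<Rightarrow> 'h" and G :: "'w \<Rightarrow> 'g" and Z :: "'w \<Rightarrow> 'z"
  assumes fin: "finite (set_pmf P)" and finI: "finite I" and pW: "prb P W > 0"
    and N: "real (card (Z ` (set_pmf P \<inter> W))) \<le> N"
    and CI: "\<And>w. w \<in> set_pmf P \<Longrightarrow> prb P {w'. (\<forall>i\<in>I. X i w' = X i w) \<and> G w' = G w}
         = prb P {w'. G w' = G w} * (\<Prod>i\<in>I. prb P {w'. X i w' = X i w \<and> Gm i w' = Gm i w} / prb P {w'. Gm i w' = Gm i w})"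
  shows "(\<Sum>w\<in>set_pmf P. pmf_given P W w *
           ln (prob_given P W {w'. (\<forall>i\<in>I. X i w' = X i w) \<and> G w' = G w \<and> Z w' = Z w}
             / (prob_given P W {w'. G w' = G w \<and> Z w' = Z w}
                * (\<Prod>i\<in>I. prb P {w'. X i w' = X i w \<and> Gm i w' = Gm i w} / prb P {w'. Gm i w' = Gm i w}))))
       \<le> ln (N / prb P W)"
proof -
  define pw where "pw = prb P W"
  define b where "b w = prob_given P W {w'. G w' = G w \<and> Z w' = Z w}" for w
  define c where "c w = (\<Prod>i\<in>I. prb P {w'. X i w' = X i w \<and> Gm i w' = Gm i w} / prb P {w'. Gm i w' = Gm i w})" for w
  define e where "e w = prob_given P W {w'. (\<forall>i\<in>I. X i w' = X i w) \<and> G w' = G w \<and> Z w' = Z w}" for w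
  define g where "g w = prb P {w'. G w' = G w}" for w
  have pwp: "pw > 0" using pW by (simp add: pw_def)
  have pos: "b w > 0" "c w > 0" "e w > 0" "g w > 0" if w: "w \<in> set_pmf P" "w \<in> W" for w
    using w pW unfolding b_def c_def e_def g_def
    by (auto intro!: prob_given_pos prod_pos divide_pos_pos measure_pmf_posI)
  have e_le: "e w / (b w * c w) \<le> g w / (pw * b w)" if w: "w \<in> set_pmf P" "w \<in> W" for w
  proof -
    have "e w \<le> prb P {w'. (\<forall>i\<in>I. X i w' = X i w) \<and> G w' = G w} / pw"
      unfolding e_def prob_given_def pw_def using pW
      by (intro divide_right_mono measure_pmf.finite_measure_mono) auto
    also have "\<dots> = g w * c w / pw" using CI[OF w(1)] by (simp add: g_def c_def)
    finally show ?thesis using pos[OF w] pW by (simp add: pw_def field_simps)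
  qed
  have "(\<Sum>w\<in>set_pmf P. pmf_given P W w * ln (e w / (b w * c w)))
      \<le> (\<Sum>w\<in>set_pmf P. pmf_given P W w * ln (g w / (pw * b w)))"
  proof (rule sum_mono)
    fix w assume w: "w \<in> set_pmf P"
    show "pmf_given P W w * ln (e w / (b w * c w)) \<le> pmf_given P W w * ln (g w / (pw * b w))"
    proof (cases "w \<in> W")
      case True
      thus ?thesis using e_le[OF w True] pos[OF w True] pwp by (intro mult_left_mono) auto
    qed (simp add: pmf_given_def)
  qed
  also have "\<dots> \<le> ln (N / pw)"
  proof (rule jensen_ln_le[OF fin _ sum_pmf_given[OF fin pW]])
    show "(\<Sum>w\<in>set_pmf P. pmf_given P W w * (g w / (pw * b w))) \<le> N / pw"
      using sum_pmf_given_marginal_ratio_le[OF fin pW N] by (simp add: g_def pw_def b_def)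
    fix w assume w: "w \<in> set_pmf P" "pmf_given P W w > 0"
    hence "w \<in> W" by (auto intro: pmf_given_pos_imp_mem)
    thus "g w / (pw * b w) > 0" using pos[OF w(1)] pwp by simp
  qed simp
  finally show ?thesis by (simp add: pw_def b_def c_def e_def)
qed

lemma raz_lemma:
  fixes X :: "'i \<Rightarrow> 'w \<Rightarrow> 'x" and Gm :: "'i \<Rightarrow> 'w \<Rightarrow> 'h" and G :: "'w \<Rightarrow> 'g" and Z :: "'w \<Rightarrow> 'z"
  assumes fin: "finite (set_pmf P)" and finI: "finite I" and pW: "prb P W > 0"
    and N: "real (card (Z ` (set_pmf P \<inter> W))) \<le> N"
    and CI: "\<And>w. w \<in> set_pmf P \<Longrightarrow> prb P {w'. (\<forall>i\<in>I. X i w' = X i w) \<and> G w' = G w}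
         = prb P {w'. G w' = G w} * (\<Prod>i\<in>I. prb P {w'. X i w' = X i w \<and> Gm i w' = Gm i w} / prb P {w'. Gm i w' = Gm i w})"
  shows "(\<Sum>i\<in>I. \<Sum>w\<in>set_pmf P. pmf_given P W w *
           ln (prob_given P W {w'. X i w' = X i w \<and> G w' = G w \<and> Z w' = Z w}
             / (prb P {w'. X i w' = X i w \<and> Gm i w' = Gm i w} / prb P {w'. Gm i w' = Gm i w}
                * prob_given P W {w'. G w' = G w \<and> Z w' = Z w})))
       \<le> ln (N / prb P W)"
proof -
  define U where "U w = (G w, Z w)" for w
  define a where "a i w = prob_given P W {w'. X i w' = X i w \<and> U w' = U w}" for i w
  define b where "b w = prob_given P W {w'. U w' = U w}" for w
  define c where "c i w = prb P {w'. X i w' = X i w \<and> Gm i w' = Gm i w} / prb P {w'. Gm i w' = Gm i w}" for i w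
  define e where "e w = prob_given P W {w'. (\<forall>i\<in>I. X i w' = X i w) \<and> U w' = U w}" for w
  define q where "q = pmf_given P W"
  have pos: "a i w > 0" "b w > 0" "c i w > 0" "e w > 0" if w: "w \<in> set_pmf P" "w \<in> W" for i w
    using w pW unfolding a_def b_def c_def e_def
    by (auto intro!: prob_given_pos divide_pos_pos measure_pmf_posI)
  have split: "(\<Sum>i\<in>I. ln (a i w / (c i w * b w)))
      = ln (b w * (\<Prod>i\<in>I. a i w / b w) / e w) + ln (e w / (b w * (\<Prod>i\<in>I. c i w)))"
    if "w \<in> set_pmf P" "w \<in> W" for w
    using pos[OF that] by (intro sum_ln_ratio_split finI)
  have "(\<Sum>i\<in>I. \<Sum>w\<in>set_pmf P. q w * ln (a i w / (c i w * b w)))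
      = (\<Sum>w\<in>set_pmf P. q w * ln (b w * (\<Prod>i\<in>I. a i w / b w) / e w))
        + (\<Sum>w\<in>set_pmf P. q w * ln (e w / (b w * (\<Prod>i\<in>I. c i w))))"
  proof -
    have "(\<Sum>i\<in>I. \<Sum>w\<in>set_pmf P. q w * ln (a i w / (c i w * b w)))
        = (\<Sum>w\<in>set_pmf P. q w * (\<Sum>i\<in>I. ln (a i w / (c i w * b w))))"
      by (subst sum.swap) (simp add: sum_distrib_left)
    also have "\<dots> = (\<Sum>w\<in>set_pmf P. q w * (ln (b w * (\<Prod>i\<in>I. a i w / b w) / e w)
        + ln (e w / (b w * (\<Prod>i\<in>I. c i w)))))"
      using split by (intro sum.cong refl) (auto simp: q_def pmf_given_def)
    finally show ?thesis by (simp add: algebra_simps sum.distrib)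
  qed
  also have "\<dots> \<le> 0 + ln (N / prb P W)"
  proof (rule add_mono)
    show "(\<Sum>w\<in>set_pmf P. q w * ln (b w * (\<Prod>i\<in>I. a i w / b w) / e w)) \<le> 0"
      using raz_product_term[OF fin finI pW, of U X] by (simp add: q_def a_def b_def e_def)
    show "(\<Sum>w\<in>set_pmf P. q w * ln (e w / (b w * (\<Prod>i\<in>I. c i w)))) \<le> ln (N / prb P W)"
      using raz_correlation_term[OF fin finI pW N CI]
      by (simp add: q_def b_def c_def e_def U_def conj_assoc)
  qed
  finally show ?thesis by (simp add: q_def a_def b_def c_def U_def)
qed

lemma raz_lemma_independent:
  fixes X :: "'i \<Rightarrow> 'w \<Rightarrow> 'x"
  assumes fin: "finite (set_pmf P)" and finI: "finite I" and pW: "prb P W > 0"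
    and indep: "\<And>w. w \<in> set_pmf P \<Longrightarrow>
      prb P {w'. \<forall>i\<in>I. X i w' = X i w} = (\<Prod>i\<in>I. prb P {w'. X i w' = X i w})"
  shows "(\<Sum>i\<in>I. \<Sum>w\<in>set_pmf P. pmf_given P W w *
           ln (prob_given P W {w'. X i w' = X i w} / prb P {w'. X i w' = X i w}))
       \<le> ln (1 / prb P W)"
proof -
  have "card ((\<lambda>_. ()) ` (set_pmf P \<inter> W)) \<le> card {()}"
    by (rule card_mono) auto
  hence N: "real (card ((\<lambda>_. ()) ` (set_pmf P \<inter> W))) \<le> 1" by simp
  have "(\<Sum>i\<in>I. \<Sum>w\<in>set_pmf P. pmf_given P W w *
           ln (prob_given P W {w'. X i w' = X i w \<and> () = () \<and> () = ()}
             / (prb P {w'. X i w' = X i w \<and> () = ()} / prb P {w'. () = ()}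
                * prob_given P W {w'. () = () \<and> () = ()})))
       \<le> ln (1 / prb P W)"
    by (rule raz_lemma[OF fin finI pW N]) (use indep in \<open>simp add: measure_pmf.prob_space\<close>)
  thus ?thesis using prob_given_UNIV[OF pW] by (simp add: measure_pmf.prob_space)
qed

section \<open>Total variation between two conditionings\<close>

lemma tvd_eq_sum_on_support:
  assumes "finite A" "finite B"
    and "\<And>y r. (y, r) \<notin> A \<times> B \<Longrightarrow> p y r = 0" "\<And>y r. (y, r) \<notin> A \<times> B \<Longrightarrow> q y r = 0"
  shows "2 * tvd p q = (\<Sum>y\<in>A. \<Sum>r\<in>B. \<bar>p y r - q y r\<bar>)"
proof -
  have "(\<Sum>\<^sub>\<infinity>(y, r)\<in>UNIV. \<bar>p y r - q y r\<bar>) = (\<Sum>\<^sub>\<infinity>(y, r)\<in>A \<times> B. \<bar>p y r - q y r\<bar>)"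
  proof (intro infsum_cong_neutral)
    fix x assume "x \<in> UNIV - A \<times> B"
    thus "(case x of (y, r) \<Rightarrow> \<bar>p y r - q y r\<bar>) = 0" using assms(3,4) by (cases x) auto
  qed auto
  also have "\<dots> = (\<Sum>y\<in>A. \<Sum>r\<in>B. \<bar>p y r - q y r\<bar>)"
    using assms(1,2) by (simp add: sum.cartesian_product)
  finally show ?thesis by (simp add: tvd_def)
qed

lemma PYcond_eq_0:
  assumes "(y, r) \<notin> Y ` set_pmf P \<times> R ` set_pmf P"
  shows "PYcond P Y R W h y r = 0"
proof (cases "y \<in> Y ` set_pmf P")
  case False
  hence "set_pmf P \<inter> {w. Y w = y} = {}" by auto
  thus ?thesis by (simp add: PYcond_def measure_pmf_zero_iff)
next
  case True
  hence "set_pmf P \<inter> {w. R w = r \<and> w \<in> W \<and> h (Y w) = h y} = {}" using assms by auto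
  thus ?thesis by (simp add: PYcond_def measure_pmf_zero_iff)
qed

lemma sum_abs_PYcond_sub_joint:
  assumes fin: "finite (set_pmf P)" and pW: "prb P W > 0"
  shows "(\<Sum>r\<in>R ` set_pmf P. \<bar>PYcond P Y R W id y r - prb P {w. R w = r \<and> w \<in> W \<and> Y w = y} / prb P W\<bar>)
       \<le> \<bar>prb P {w. Y w = y} - prb P {w. w \<in> W \<and> Y w = y} / prb P W\<bar>"
proof -
  define pw where "pw = prb P W"
  define c where "c = prb P {w. w \<in> W \<and> Y w = y}"
  define e where "e r = prb P {w. R w = r \<and> w \<in> W \<and> Y w = y}" for r
  have esum: "(\<Sum>r\<in>R ` set_pmf P. e r) = c"
    unfolding e_def c_def using sum_prob_fibres[OF fin, of "R ` set_pmf P" R "{w. w \<in> W \<and> Y w = y}"] fin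
    by simp
  show ?thesis
  proof (cases "c = 0")
    case True
    have "e r \<le> c" for r unfolding e_def c_def by (rule measure_pmf.finite_measure_mono) auto
    hence "e r = 0" for r using True by (intro antisym) (auto simp: e_def)
    thus ?thesis by (simp add: PYcond_def e_def)
  next
    case False
    hence cp: "c > 0" by (simp add: c_def less_le)
    have "\<bar>PYcond P Y R W id y r - e r / pw\<bar> = e r / c * \<bar>prb P {w. Y w = y} - c / pw\<bar>" for r
    proof -
      have "PYcond P Y R W id y r - e r / pw = e r / c * (prb P {w. Y w = y} - c / pw)"
        using cp pW by (simp add: PYcond_def e_def c_def pw_def field_simps)
      thus ?thesis using cp by (simp add: abs_mult e_def)
    qed
    hence "(\<Sum>r\<in>R ` set_pmf P. \<bar>PYcond P Y R W id y r - e r / pw\<bar>)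
        = (\<Sum>r\<in>R ` set_pmf P. e r) / c * \<bar>prb P {w. Y w = y} - c / pw\<bar>"
      by (simp add: sum_distrib_right sum_divide_distrib)
    thus ?thesis using esum cp by (simp add: e_def c_def pw_def)
  qed
qed

text \<open>Averaging \<open>Y\<close> within the fibres of \<open>h\<close> does not increase the \<open>l\<^sub>1\<close> distance between
  \<open>P\<^sub>Y\<close> and \<open>P\<^bsub>Y|W\<^esub>\<close>.\<close>

lemma sum_abs_PYcond_sub_mixture:
  fixes Y :: "'w \<Rightarrow> 'y" and h :: "'y \<Rightarrow> 'u"
  assumes fin: "finite (set_pmf P)" and pW: "prb P W > 0"
  shows "(\<Sum>y\<in>Y ` set_pmf P. \<Sum>r\<in>R ` set_pmf P.
            \<bar>prb P {w. Y w = y} / prb P {w. h (Y w) = h y} * (prb P {w. R w = r \<and> w \<in> W \<and> h (Y w) = h y} / prb P W)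
             - PYcond P Y R W h y r\<bar>)
       \<le> (\<Sum>y\<in>Y ` set_pmf P. \<bar>prb P {w. Y w = y} - prb P {w. w \<in> W \<and> Y w = y} / prb P W\<bar>)"
proof -
  define pw where "pw = prb P W"
  define Ys where "Ys = Y ` set_pmf P"
  define Rs where "Rs = R ` set_pmf P"
  define PY where "PY y = prb P {w. Y w = y}" for y
  define Ph where "Ph u = prb P {w. h (Y w) = u}" for u
  define c where "c y = prb P {w. w \<in> W \<and> Y w = y}" for y
  define d where "d u = prb P {w. w \<in> W \<and> h (Y w) = u}" for u
  define f where "f r u = prb P {w. R w = r \<and> w \<in> W \<and> h (Y w) = u}" for r u
  have finYs: "finite Ys" and YsS: "Y ` set_pmf P \<subseteq> Ys" using fin by (auto simp: Ys_def)
  have Phpos: "Ph (h y) > 0" if "y \<in> Ys" for y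
    using that unfolding Ys_def Ph_def by (auto intro!: measure_pmf_posI)
  have fibre: "(\<Sum>r\<in>Rs. \<bar>PY y / Ph (h y) * (f r (h y) / pw) - PYcond P Y R W h y r\<bar>)
      \<le> PY y / Ph (h y) * \<bar>Ph (h y) - d (h y) / pw\<bar>" if y: "y \<in> Ys" for y
  proof -
    have "PY y / Ph (h y) * (f r (h y) / pw) - PYcond P Y R W h y r
        = PY y / Ph (h y) * (f r (h y) / pw - PYcond P (\<lambda>w. h (Y w)) R W id (h y) r)" for r
      using Phpos[OF y] by (simp add: PYcond_def PY_def Ph_def f_def field_simps)
    hence "(\<Sum>r\<in>Rs. \<bar>PY y / Ph (h y) * (f r (h y) / pw) - PYcond P Y R W h y r\<bar>)
        = PY y / Ph (h y) * (\<Sum>r\<in>Rs. \<bar>PYcond P (\<lambda>w. h (Y w)) R W id (h y) r - f r (h y) / pw\<bar>)"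
      by (simp add: abs_mult abs_minus_commute sum_distrib_left PY_def Ph_def)
    also have "\<dots> \<le> PY y / Ph (h y) * \<bar>Ph (h y) - d (h y) / pw\<bar>"
      using sum_abs_PYcond_sub_joint[OF fin pW, where R = R and Y = "\<lambda>w. h (Y w)" and y = "h y"]
      by (intro mult_left_mono) (simp_all add: Rs_def f_def Ph_def d_def pw_def PY_def)
    finally show ?thesis .
  qed
  have fibre_sum: "(\<Sum>y\<in>{y\<in>Ys. h y = u}. PY y - c y / pw) = Ph u - d u / pw" for u
    using sum_prob_fibres_compose[OF fin finYs YsS, where h = h and u = u and E = UNIV]
      sum_prob_fibres_compose[OF fin finYs YsS, where h = h and u = u and E = W]
    by (simp add: sum_subtractf sum_divide_distrib[symmetric] PY_def Ph_def c_def d_def conj_commute)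
  have "(\<Sum>y\<in>Ys. \<Sum>r\<in>Rs. \<bar>PY y / Ph (h y) * (f r (h y) / pw) - PYcond P Y R W h y r\<bar>)
      \<le> (\<Sum>y\<in>Ys. PY y / Ph (h y) * \<bar>Ph (h y) - d (h y) / pw\<bar>)"
    using fibre by (rule sum_mono)
  also have "\<dots> = (\<Sum>u\<in>h ` Ys. \<Sum>y\<in>{y\<in>Ys. h y = u}. PY y / Ph (h y) * \<bar>Ph (h y) - d (h y) / pw\<bar>)"
    using finYs by (rule sum.image_gen)
  also have "\<dots> = (\<Sum>u\<in>h ` Ys. \<Sum>y\<in>{y\<in>Ys. h y = u}. PY y / Ph u * \<bar>Ph u - d u / pw\<bar>)"
    by (intro sum.cong refl) auto
  also have "\<dots> = (\<Sum>u\<in>h ` Ys. \<bar>Ph u - d u / pw\<bar>)"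
  proof (rule sum.cong[OF refl])
    fix u assume "u \<in> h ` Ys"
    hence "Ph u > 0" using Phpos by auto
    moreover have "(\<Sum>y\<in>{y\<in>Ys. h y = u}. PY y) = Ph u"
      using sum_prob_fibres_compose[OF fin finYs YsS, where h = h and u = u and E = UNIV]
      by (simp add: PY_def Ph_def)
    ultimately show "(\<Sum>y\<in>{y\<in>Ys. h y = u}. PY y / Ph u * \<bar>Ph u - d u / pw\<bar>) = \<bar>Ph u - d u / pw\<bar>"
      by (simp add: sum_distrib_right[symmetric] sum_divide_distrib[symmetric])
  qed
  also have "\<dots> \<le> (\<Sum>u\<in>h ` Ys. \<Sum>y\<in>{y\<in>Ys. h y = u}. \<bar>PY y - c y / pw\<bar>)"
    unfolding fibre_sum[symmetric] by (intro sum_mono sum_abs)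
  also have "\<dots> = (\<Sum>y\<in>Ys. \<bar>PY y - c y / pw\<bar>)"
    using finYs by (rule sum.image_gen[symmetric])
  finally show ?thesis by (simp add: Ys_def Rs_def PY_def Ph_def c_def f_def pw_def)
qed

text \<open>Triangle inequality through \<open>P\<^bsub>Y R|W\<^esub>\<close> and through the law obtained by resampling \<open>Y\<close>
  within its \<open>h\<close>-fibre: the distance between the two conditionings splits into two marginal terms
  and a mixed term.\<close>

lemma tvd_PYcond_split:
  fixes Y :: "'w \<Rightarrow> 'y" and R :: "'w \<Rightarrow> 'r" and h :: "'y \<Rightarrow> 'u"
  assumes fin: "finite (set_pmf P)" and pW: "prb P W > 0"
  shows "2 * tvd (PYcond P Y R W id) (PYcond P Y R W h)
     \<le> 2 * (\<Sum>y\<in>Y ` set_pmf P. \<bar>prb P {w. Y w = y} - prb P {w. w \<in> W \<and> Y w = y} / prb P W\<bar>)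
       + (\<Sum>y\<in>Y ` set_pmf P. \<Sum>r\<in>R ` set_pmf P.
            \<bar>prb P {w. R w = r \<and> w \<in> W \<and> Y w = y} / prb P W
             - prb P {w. Y w = y} / prb P {w. h (Y w) = h y} * (prb P {w. R w = r \<and> w \<in> W \<and> h (Y w) = h y} / prb P W)\<bar>)"
proof -
  define Ys where "Ys = Y ` set_pmf P"
  define Rs where "Rs = R ` set_pmf P"
  define A where "A = PYcond P Y R W id"
  define B where "B = PYcond P Y R W h"
  define J where "J y r = prb P {w. R w = r \<and> w \<in> W \<and> Y w = y} / prb P W" for y r
  define M where "M y r = prb P {w. Y w = y} / prb P {w. h (Y w) = h y} * (prb P {w. R w = r \<and> w \<in> W \<and> h (Y w) = h y} / prb P W)" for y r
  define l where "l = (\<Sum>y\<in>Ys. \<bar>prb P {w. Y w = y} - prb P {w. w \<in> W \<and> Y w = y} / prb P W\<bar>)"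
  have "2 * tvd A B = (\<Sum>y\<in>Ys. \<Sum>r\<in>Rs. \<bar>A y r - B y r\<bar>)"
    using fin by (intro tvd_eq_sum_on_support) (auto simp: A_def B_def Ys_def Rs_def intro: PYcond_eq_0)
  also have "\<dots> \<le> (\<Sum>y\<in>Ys. \<Sum>r\<in>Rs. \<bar>A y r - J y r\<bar> + \<bar>J y r - M y r\<bar> + \<bar>M y r - B y r\<bar>)"
    by (intro sum_mono) linarith
  also have "\<dots> = (\<Sum>y\<in>Ys. \<Sum>r\<in>Rs. \<bar>A y r - J y r\<bar>) + (\<Sum>y\<in>Ys. \<Sum>r\<in>Rs. \<bar>J y r - M y r\<bar>)
      + (\<Sum>y\<in>Ys. \<Sum>r\<in>Rs. \<bar>M y r - B y r\<bar>)"
    by (simp add: sum.distrib)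
  also have "\<dots> \<le> l + (\<Sum>y\<in>Ys. \<Sum>r\<in>Rs. \<bar>J y r - M y r\<bar>) + l"
  proof (intro add_mono order_refl)
    show "(\<Sum>y\<in>Ys. \<Sum>r\<in>Rs. \<bar>A y r - J y r\<bar>) \<le> l"
      unfolding l_def A_def J_def Rs_def using sum_abs_PYcond_sub_joint[OF fin pW] by (rule sum_mono)
    show "(\<Sum>y\<in>Ys. \<Sum>r\<in>Rs. \<bar>M y r - B y r\<bar>) \<le> l"
      unfolding l_def M_def B_def Ys_def Rs_def by (rule sum_abs_PYcond_sub_mixture[OF fin pW])
  qed
  finally show ?thesis by (simp add: A_def B_def J_def M_def l_def Ys_def Rs_def)
qed

section \<open>Pinsker bounds for conditioned laws\<close>

text \<open>The law \<open>P\<^bsub>Y|U\<^esub> P\<^bsub>U R|W\<^esub>\<close>: \<open>(U, R)\<close> drawn conditioned on \<open>W\<close>, then \<open>Y\<close> resampled given \<open>U\<close>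
  without conditioning on \<open>W\<close>.\<close>

definition markov_approx ::
  "'w pmf \<Rightarrow> 'w set \<Rightarrow> ('w \<Rightarrow> 'y) \<Rightarrow> ('w \<Rightarrow> 'u) \<Rightarrow> ('w \<Rightarrow> 'r) \<Rightarrow> 'y \<Rightarrow> 'u \<Rightarrow> 'r \<Rightarrow> real" where
  "markov_approx P W Y U R y u r =
     prb P {w. Y w = y \<and> U w = u} / prb P {w. U w = u} * prob_given P W {w. U w = u \<and> R w = r}"

lemma markov_approx_nonneg: "markov_approx P W Y U R y u r \<ge> 0"
  by (simp add: markov_approx_def)

lemma sum_markov_approx_le_1:
  assumes fin: "finite (set_pmf P)" and pW: "prb P W > 0"
    and fin': "finite Ys" "finite Us" "finite Rs"
    and sub: "U ` set_pmf P \<subseteq> Us" "R ` set_pmf P \<subseteq> Rs"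
  shows "(\<Sum>(y, u, r)\<in>Ys \<times> Us \<times> Rs. markov_approx P W Y U R y u r) \<le> 1"
proof -
  have "(\<Sum>(y, u, r)\<in>Ys \<times> Us \<times> Rs. markov_approx P W Y U R y u r)
      = (\<Sum>(u, r)\<in>Us \<times> Rs. \<Sum>y\<in>Ys. markov_approx P W Y U R y u r)"
    by (subst sum.cartesian_product'; subst sum.swap) (simp add: case_prod_unfold)
  also have "\<dots> \<le> (\<Sum>(u, r)\<in>Us \<times> Rs. prob_given P W {w. (U w, R w) = (u, r) \<and> w \<in> UNIV})"
  proof (rule sum_mono, clarify)
    fix u r
    have le: "(\<Sum>y\<in>Ys. prb P {w. Y w = y \<and> w \<in> {w. U w = u}}) \<le> prb P {w. U w = u}"
      by (rule sum_prob_fibres_le[OF fin fin'(1)])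
    have "(\<Sum>y\<in>Ys. markov_approx P W Y U R y u r)
        = (\<Sum>y\<in>Ys. prb P {w. Y w = y \<and> w \<in> {w. U w = u}}) / prb P {w. U w = u}
          * prob_given P W {w. U w = u \<and> R w = r}"
      by (simp add: markov_approx_def sum_divide_distrib sum_distrib_right)
    also have "\<dots> \<le> 1 * prob_given P W {w. U w = u \<and> R w = r}"
    proof (rule mult_right_mono)
      show "(\<Sum>y\<in>Ys. prb P {w. Y w = y \<and> w \<in> {w. U w = u}}) / prb P {w. U w = u} \<le> 1"
        using le by (cases "prb P {w. U w = u} = 0") (auto simp: divide_le_eq_1 less_le)
    qed simp
    also have "\<dots> = prob_given P W {w. (U w, R w) = (u, r) \<and> w \<in> UNIV}" by simp
    finally show "(\<Sum>y\<in>Ys. markov_approx P W Y U R y u r)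
        \<le> prob_given P W {w. (U w, R w) = (u, r) \<and> w \<in> UNIV}" .
  qed
  also have "\<dots> = 1"
    using sum_prob_given_fibres[OF fin, of "Us \<times> Rs" "\<lambda>w. (U w, R w)" W UNIV] fin' sub
      prob_given_UNIV[OF pW]
    by (auto simp: case_prod_unfold prod_eq_iff)
  finally show ?thesis .
qed

lemma pinsker_markov_approx:
  assumes fin: "finite (set_pmf P)" and pW: "prb P W > 0"
    and fin': "finite Ys" "finite Us" "finite Rs"
    and sub: "Y ` set_pmf P \<subseteq> Ys" "U ` set_pmf P \<subseteq> Us" "R ` set_pmf P \<subseteq> Rs"
  shows "(\<Sum>(y, u, r)\<in>Ys \<times> Us \<times> Rs.
            \<bar>prob_given P W {w. (Y w, U w, R w) = (y, u, r)} - markov_approx P W Y U R y u r\<bar>)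
       \<le> sqrt (2 * (\<Sum>w\<in>set_pmf P. pmf_given P W w *
            ln (prob_given P W {w'. (Y w', U w', R w') = (Y w, U w, R w)}
                / markov_approx P W Y U R (Y w) (U w) (R w))))"
proof -
  let ?V = "\<lambda>w. (Y w, U w, R w)" and ?Ref = "\<lambda>(y, u, r). markov_approx P W Y U R y u r"
  have "(\<Sum>v\<in>Ys \<times> Us \<times> Rs. \<bar>prob_given P W {w. ?V w = v} - ?Ref v\<bar>)
      \<le> sqrt (2 * (\<Sum>w\<in>set_pmf P. pmf_given P W w * ln (prob_given P W {w'. ?V w' = ?V w} / ?Ref (?V w))))"
  proof (rule pinsker_given[OF fin pW])
    show "finite (Ys \<times> Us \<times> Rs)" "?V ` set_pmf P \<subseteq> Ys \<times> Us \<times> Rs" using fin' sub by auto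
    show "(\<Sum>v\<in>Ys \<times> Us \<times> Rs. ?Ref v) \<le> 1" by (rule sum_markov_approx_le_1[OF fin pW fin' sub(2,3)])
    show "?Ref v \<ge> 0" for v by (simp add: case_prod_unfold markov_approx_nonneg)
    fix v assume "prob_given P W {w. ?V w = v} > 0"
    hence "prb P ({w. ?V w = v} \<inter> W) \<noteq> 0" by (auto simp: prob_given_def)
    hence "set_pmf P \<inter> ({w. ?V w = v} \<inter> W) \<noteq> {}" by (simp add: measure_pmf_zero_iff)
    then obtain w where w: "w \<in> set_pmf P" "?V w = v" "w \<in> W" by auto
    thus "?Ref v > 0" using pW
      by (auto simp: markov_approx_def intro!: mult_pos_pos divide_pos_pos measure_pmf_posI prob_given_pos)
  qed
  thus ?thesis by (simp add: case_prod_unfold prod_eq_iff)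
qed

lemma pinsker_marginal:
  assumes fin: "finite (set_pmf P)" and pW: "prb P W > 0"
  shows "(\<Sum>y\<in>Y ` set_pmf P. \<bar>prb P {w. Y w = y} - prb P {w. w \<in> W \<and> Y w = y} / prb P W\<bar>)
       \<le> sqrt (2 * (\<Sum>w\<in>set_pmf P. pmf_given P W w *
            ln (prob_given P W {w'. Y w' = Y w} / prb P {w'. Y w' = Y w})))"
proof -
  have "(\<Sum>y\<in>Y ` set_pmf P. \<bar>prob_given P W {w. Y w = y} - prb P {w. Y w = y}\<bar>)
       \<le> sqrt (2 * (\<Sum>w\<in>set_pmf P. pmf_given P W w *
            ln (prob_given P W {w'. Y w' = Y w} / prb P {w'. Y w' = Y w})))"
  proof (rule pinsker_given[OF fin pW])
    show "(\<Sum>y\<in>Y ` set_pmf P. prb P {w. Y w = y}) \<le> 1"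
      using sum_prob_fibres[OF fin, of "Y ` set_pmf P" Y UNIV] fin by (simp add: measure_pmf.prob_space)
  qed (use fin in \<open>auto intro: measure_pmf_posI\<close>)
  moreover have "prob_given P W {w. Y w = y} = prb P {w. w \<in> W \<and> Y w = y} / prb P W" for y
    unfolding prob_given_def by (rule arg_cong[where f = "\<lambda>A. prb P A / prb P W"]) auto
  ultimately show ?thesis by (simp add: abs_minus_commute)
qed

section \<open>The sample space\<close>

definition drop_one_subsets :: "nat \<Rightarrow> nat set set" where
  "drop_one_subsets k = {S. S \<subseteq> {0..<k} \<and> card S = k - 1}"

lemma drop_one_subsets_eq:
  assumes "1 \<le> k"
  shows "drop_one_subsets k = (\<lambda>t. {0..<k} - {t}) ` {0..<k}"
proof
  show "drop_one_subsets k \<subseteq> (\<lambda>t. {0..<k} - {t}) ` {0..<k}"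
  proof
    fix S assume "S \<in> drop_one_subsets k"
    hence S: "S \<subseteq> {0..<k}" "card S = k - 1" by (auto simp: drop_one_subsets_def)
    have fS: "finite S" using S(1) finite_subset by blast
    have "card ({0..<k} - S) = card {0..<k} - card S" by (rule card_Diff_subset[OF fS S(1)])
    hence "card ({0..<k} - S) = 1" using S(2) assms by simp
    then obtain t where t: "{0..<k} - S = {t}" by (auto simp: card_1_singleton_iff)
    have "t \<in> {0..<k} - S" using t by blast
    hence "t < k" by simp
    moreover have "S = {0..<k} - {t}" using t S(1) by blast
    ultimately show "S \<in> (\<lambda>t. {0..<k} - {t}) ` {0..<k}" by auto
  qed
  show "(\<lambda>t. {0..<k} - {t}) ` {0..<k} \<subseteq> drop_one_subsets k"
    by (auto simp: drop_one_subsets_def)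
qed

lemma inj_on_Diff_singleton: "inj_on (\<lambda>t. {0..<k} - {t}) {0..<k}"
proof (rule inj_onI)
  fix x y assume x: "x \<in> {0..<k}" and eq: "{0..<k} - {x} = {0..<k} - {y}"
  have "x \<notin> {0..<k} - {x}" by blast
  hence "x \<notin> {0..<k} - {y}" using eq by simp
  thus "x = y" using x by blast
qed

lemma card_drop_one_subsets: "1 \<le> k \<Longrightarrow> card (drop_one_subsets k) = k"
proof -
  assume k: "1 \<le> k"
  have "card (drop_one_subsets k) = card ((\<lambda>t. {0..<k} - {t}) ` {0..<k})" by (simp only: drop_one_subsets_eq[OF k])
  also have "\<dots> = card {0..<k}" by (rule card_image[OF inj_on_Diff_singleton])
  finally show ?thesis by simp
qed

lemma finite_drop_one_subsets: "finite (drop_one_subsets k)"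
  by (rule finite_subset[of _ "Pow {0..<k}"]) (auto simp: drop_one_subsets_def)

lemma drop_one_subsets_nonempty: "drop_one_subsets k \<noteq> {}"
proof (cases "k = 0")
  case True
  hence "{} \<in> drop_one_subsets k" by (simp add: drop_one_subsets_def)
  thus ?thesis by auto
next
  case False
  hence "{0..<k} - {0} \<in> drop_one_subsets k" using drop_one_subsets_eq[of k] by auto
  thus ?thesis by auto
qed

lemma prob_uniform_drop_one:
  assumes "1 \<le> k" "d \<in> drop_one_subsets k"
  shows "prb (pmf_of_set (drop_one_subsets k)) {d} = 1 / real k"
  using assms finite_drop_one_subsets drop_one_subsets_nonempty card_drop_one_subsets[OF assms(1)] by (simp add: measure_pmf_single)

lemma sample_eq:
  "sample k n m mu
   = pair_pmf (Pi_pmf {0..<n} [] (\<lambda>_. mu)) (Pi_pmf {0..<m} {} (\<lambda>_. pmf_of_set (drop_one_subsets k)))"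
  by (simp add: sample_def drop_one_subsets_def)

definition unzip_fun :: "(nat \<Rightarrow> 'a \<times> 'b) \<Rightarrow> (nat \<Rightarrow> 'a) \<times> (nat \<Rightarrow> 'b)" where
  "unzip_fun h = ((\<lambda>j. fst (h j)), (\<lambda>j. snd (h j)))"

lemma inj_unzip_fun: "inj unzip_fun"
  by (rule injI) (auto simp: unzip_fun_def fun_eq_iff prod_eq_iff)

lemma pair_Pi_pmf:
  fixes p :: "nat \<Rightarrow> 'a pmf" and q :: "nat \<Rightarrow> 'b pmf"
  assumes "finite A"
  shows "pair_pmf (Pi_pmf A a p) (Pi_pmf A b q) = map_pmf unzip_fun (Pi_pmf A (a, b) (\<lambda>j. pair_pmf (p j) (q j)))"
proof (rule pmf_eqI)
  fix x :: "(nat \<Rightarrow> 'a) \<times> (nat \<Rightarrow> 'b)"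
  obtain X D where x: "x = (X, D)" by (cases x)
  have "x = unzip_fun (\<lambda>j. (X j, D j))" by (simp add: x unzip_fun_def)
  hence "pmf (map_pmf unzip_fun (Pi_pmf A (a, b) (\<lambda>j. pair_pmf (p j) (q j)))) x
       = pmf (Pi_pmf A (a, b) (\<lambda>j. pair_pmf (p j) (q j))) (\<lambda>j. (X j, D j))"
    by (simp add: pmf_map_inj'[OF inj_unzip_fun])
  also have "\<dots> = pmf (pair_pmf (Pi_pmf A a p) (Pi_pmf A b q)) x"
    using assms by (auto simp: pmf_Pi pmf_pair x prod.distrib)
  finally show "pmf (pair_pmf (Pi_pmf A a p) (Pi_pmf A b q)) x = pmf (map_pmf unzip_fun (Pi_pmf A (a, b) (\<lambda>j. pair_pmf (p j) (q j)))) x"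
    by simp
qed

text \<open>The law of round \<open>j\<close>; rounds \<open>j \<ge> m\<close> carry the dummy set \<open>{}\<close>, so that the sample is a
  product over all \<open>n\<close> rounds.\<close>

definition round_pmf :: "nat \<Rightarrow> nat \<Rightarrow> 'q list pmf \<Rightarrow> nat \<Rightarrow> ('q list \<times> nat set) pmf" where
  "round_pmf k m mu j = pair_pmf mu (if j < m then pmf_of_set (drop_one_subsets k) else return_pmf {})"

lemma sample_eq_map_Pi_pmf:
  assumes "m \<le> n"
  shows "sample k n m mu = map_pmf unzip_fun (Pi_pmf {0..<n} ([], {}) (round_pmf k m mu))"
proof -
  have "Pi_pmf {0..<m} {} (\<lambda>_. pmf_of_set (drop_one_subsets k))
      = Pi_pmf {0..<n} {} (\<lambda>j. if j < m then pmf_of_set (drop_one_subsets k) else return_pmf {})"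
  proof -
    have "Pi_pmf {0..<n} {} (\<lambda>j. if j < m then pmf_of_set (drop_one_subsets k) else return_pmf {})
        = Pi_pmf {0..<m} {} (\<lambda>j. if j < m then pmf_of_set (drop_one_subsets k) else return_pmf {})"
      using assms by (intro Pi_pmf_subset') auto
    also have "\<dots> = Pi_pmf {0..<m} {} (\<lambda>_. pmf_of_set (drop_one_subsets k))"
      by (intro Pi_pmf_cong) auto
    finally show ?thesis by simp
  qed
  thus ?thesis by (simp add: sample_eq pair_Pi_pmf round_pmf_def[abs_def])
qed

lemma prob_sample_rounds:
  assumes "m \<le> n"
  shows "prb (sample k n m mu) {w. \<forall>j<n. (fst w j, snd w j) \<in> E j} = (\<Prod>j<n. prb (round_pmf k m mu j) (E j))"
proof -
  have "unzip_fun -` {w. \<forall>j<n. (fst w j, snd w j) \<in> E j} = Pi {0..<n} E"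
    by (auto simp: unzip_fun_def Pi_def)
  hence "prb (sample k n m mu) {w. \<forall>j<n. (fst w j, snd w j) \<in> E j} = prb (Pi_pmf {0..<n} ([], {}) (round_pmf k m mu)) (Pi {0..<n} E)"
    by (simp add: sample_eq_map_Pi_pmf[OF assms])
  also have "\<dots> = (\<Prod>j\<in>{0..<n}. prb (round_pmf k m mu j) (E j))" by (rule measure_Pi_pmf_Pi) simp
  finally show ?thesis by (simp add: atLeast0LessThan)
qed

lemma prob_sample_round:
  assumes "m \<le> n" "j < n"
  shows "prb (sample k n m mu) {w. (fst w j, snd w j) \<in> E} = prb (round_pmf k m mu j) E"
proof -
  have eq: "{w. (fst w j, snd w j) \<in> E} = {w. \<forall>l<n. (fst w l, snd w l) \<in> (if l = j then E else UNIV)}"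
    using assms by auto
  have "prb (sample k n m mu) {w. (fst w j, snd w j) \<in> E} = (\<Prod>l<n. prb (round_pmf k m mu l) (if l = j then E else UNIV))"
    unfolding eq by (rule prob_sample_rounds[OF assms(1)])
  also have "\<dots> = (\<Prod>l<n. if l = j then prb (round_pmf k m mu j) E else 1)"
    by (intro prod.cong) auto
  also have "\<dots> = prb (round_pmf k m mu j) E" using assms(2) by (simp add: prod.delta)
  finally show ?thesis .
qed

lemma set_pmf_sample:
  "set_pmf (sample k n m mu) = PiE_dflt {0..<n} [] (\<lambda>_. set_pmf mu) \<times> PiE_dflt {0..<m} {} (\<lambda>_. drop_one_subsets k)"
  by (simp add: sample_eq set_Pi_pmf finite_drop_one_subsets drop_one_subsets_nonempty o_def)

lemma finite_set_pmf_sample: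
  assumes "finite (set_pmf mu)"
  shows "finite (set_pmf (sample k n m mu))"
  unfolding set_pmf_sample using assms finite_drop_one_subsets by auto

lemma prob_pair_pmf_middle:
  assumes fA: "finite (set_pmf A)" and fB: "finite (set_pmf B)" and fC: "finite (set_pmf C)"
  shows "prb (pair_pmf A (pair_pmf B C)) {x. fst (snd x) \<in> Bs \<and> (fst x, snd (snd x)) \<in> F}
       = prb B Bs * prb (pair_pmf A C) F"
proof -
  let ?SA = "set_pmf A" and ?SB = "set_pmf B" and ?SC = "set_pmf C"
  have f1: "finite (set_pmf (pair_pmf A (pair_pmf B C)))" using assms by simp
  have f2: "finite (set_pmf (pair_pmf A C))" using assms by simp
  have "prb (pair_pmf A (pair_pmf B C)) {x. fst (snd x) \<in> Bs \<and> (fst x, snd (snd x)) \<in> F}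
     = (\<Sum>x\<in>?SA \<times> (?SB \<times> ?SC). if fst (snd x) \<in> Bs \<and> (fst x, snd (snd x)) \<in> F then pmf (pair_pmf A (pair_pmf B C)) x else 0)"
    using prob_finite_sum[OF f1] by simp
  also have "\<dots> = (\<Sum>a\<in>?SA. \<Sum>b\<in>?SB. \<Sum>c\<in>?SC. if b \<in> Bs \<and> (a, c) \<in> F then pmf A a * (pmf B b * pmf C c) else 0)"
    by (simp add: sum.cartesian_product' pmf_pair cong: if_cong)
  also have "\<dots> = (\<Sum>a\<in>?SA. \<Sum>b\<in>?SB. \<Sum>c\<in>?SC. (if b \<in> Bs then pmf B b else 0) * (if (a, c) \<in> F then pmf A a * pmf C c else 0))"
    by (intro sum.cong refl) auto
  also have "\<dots> = (\<Sum>a\<in>?SA. (\<Sum>b\<in>?SB. if b \<in> Bs then pmf B b else 0) * (\<Sum>c\<in>?SC. if (a, c) \<in> F then pmf A a * pmf C c else 0))"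
    by (simp only: sum_product)
  also have "\<dots> = (\<Sum>b\<in>?SB. if b \<in> Bs then pmf B b else 0) * (\<Sum>a\<in>?SA. \<Sum>c\<in>?SC. if (a, c) \<in> F then pmf A a * pmf C c else 0)"
    by (simp only: sum_distrib_left)
  also have "(\<Sum>b\<in>?SB. if b \<in> Bs then pmf B b else 0) = prb B Bs" using prob_finite_sum[OF fB] by simp
  also have "(\<Sum>a\<in>?SA. \<Sum>c\<in>?SC. if (a, c) \<in> F then pmf A a * pmf C c else 0) = prb (pair_pmf A C) F"
    using prob_finite_sum[OF f2, of F] by (simp add: sum.cartesian_product' pmf_pair cong: if_cong)
  finally show ?thesis .
qed

lemma finite_set_Pi_pmf:
  assumes "finite A" "\<And>x. x \<in> A \<Longrightarrow> finite (set_pmf (p x))"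
  shows "finite (set_pmf (Pi_pmf A d p))"
  using assms by (simp add: set_Pi_pmf finite_PiE_dflt)

lemma prob_sample_fix_D:
  assumes i: "i < m" and fmu: "finite (set_pmf mu)"
    and indep: "\<And>X D d'. (X, D) \<in> E \<longleftrightarrow> (X, D(i := d')) \<in> E"
  shows "prb (sample k n m mu) {w. snd w i = d \<and> w \<in> E}
       = prb (pmf_of_set (drop_one_subsets k)) {d} * prb (sample k n m mu) E"
proof -
  define U where "U = pmf_of_set (drop_one_subsets k)"
  define A' where "A' = {0..<m} - {i}"
  define PD' where "PD' = Pi_pmf A' {} (\<lambda>_. U)"
  define PX where "PX = Pi_pmf {0..<n} [] (\<lambda>_. mu)"
  define M where "M = pair_pmf PX (pair_pmf U PD')"
  define \<phi> where "\<phi> x = (fst x, (snd (snd x))(i := fst (snd x)))" for x :: "(nat \<Rightarrow> 'a list) \<times> nat set \<times> (nat \<Rightarrow> nat set)"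
  have ins: "{0..<m} = insert i A'" using i by (auto simp: A'_def)
  have "Pi_pmf {0..<m} {} (\<lambda>_. U) = map_pmf (\<lambda>(y, f). f(i := y)) (pair_pmf U PD')"
    unfolding ins PD'_def by (rule Pi_pmf_insert) (auto simp: A'_def)
  hence samp: "sample k n m mu = map_pmf \<phi> M"
    by (simp add: sample_eq U_def PX_def M_def pair_map_pmf2 \<phi>_def[abs_def] apsnd_def map_prod_def case_prod_unfold)
  have fU: "finite (set_pmf U)" using finite_drop_one_subsets drop_one_subsets_nonempty by (simp add: U_def)
  have fPD: "finite (set_pmf PD')" unfolding PD'_def using fU by (intro finite_set_Pi_pmf) (auto simp: A'_def)
  have fPX: "finite (set_pmf PX)" unfolding PX_def using fmu by (intro finite_set_Pi_pmf) auto
  define E' where "E' = {(X, f). (X, f(i := d)) \<in> E}"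
  have pre1: "\<phi> -` {w. snd w i = d \<and> w \<in> E} = {x. fst (snd x) \<in> {d} \<and> (fst x, snd (snd x)) \<in> E'}"
    by (auto simp: \<phi>_def E'_def)
  have pre2: "\<phi> -` E = {x. fst (snd x) \<in> UNIV \<and> (fst x, snd (snd x)) \<in> E'}"
  proof (auto simp: \<phi>_def E'_def)
    fix a b c assume "(a, c(i := b)) \<in> E"
    hence "(a, c(i := b, i := d)) \<in> E" using indep by blast
    thus "(a, c(i := d)) \<in> E" by simp
  next
    fix a b c assume "(a, c(i := d)) \<in> E"
    hence "(a, c(i := d, i := b)) \<in> E" using indep by blast
    thus "(a, c(i := b)) \<in> E" by simp
  qed
  have "prb (sample k n m mu) {w. snd w i = d \<and> w \<in> E} = prb M {x. fst (snd x) \<in> {d} \<and> (fst x, snd (snd x)) \<in> E'}"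
    by (simp only: samp measure_map_pmf pre1)
  also have "\<dots> = prb U {d} * prb (pair_pmf PX PD') E'"
    unfolding M_def by (rule prob_pair_pmf_middle[OF fPX fU fPD])
  finally have fixed: "prb (sample k n m mu) {w. snd w i = d \<and> w \<in> E} = prb U {d} * prb (pair_pmf PX PD') E'" .
  have "prb (sample k n m mu) E = prb M {x. fst (snd x) \<in> UNIV \<and> (fst x, snd (snd x)) \<in> E'}"
    by (simp only: samp measure_map_pmf pre2)
  also have "\<dots> = prb U UNIV * prb (pair_pmf PX PD') E'"
    unfolding M_def by (rule prob_pair_pmf_middle[OF fPX fU fPD])
  finally have total: "prb (sample k n m mu) E = prb (pair_pmf PX PD') E'" by simp
  show ?thesis using fixed total by (simp add: U_def)
qed

definition Y_round :: "nat \<Rightarrow> (nat \<Rightarrow> 'q set) \<Rightarrow> 'q list \<times> nat set \<Rightarrow> 'q option list" where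
  "Y_round k Xb c = map (\<lambda>t. if fst c ! t \<in> Xb t then None else Some (fst c ! t)) [0..<k]"

definition Om_round :: "nat \<Rightarrow> nat \<Rightarrow> (nat \<Rightarrow> 'q set) \<Rightarrow> nat \<Rightarrow> 'q list \<times> nat set
     \<Rightarrow> (nat set \<times> (nat \<Rightarrow> 'q option option)) + 'q list" where
  "Om_round k m Xb j c = (if j < m then Inl (snd c, (\<lambda>t. if t \<in> snd c then Some (Y_round k Xb c ! t) else None)) else Inr (fst c))"

lemma Yv_eq_Y_round: "Yv k Xb X i = Y_round k Xb (X i, D i)"
  by (simp add: Yv_def Y_round_def)

lemma Om_eq_Om_round: "Om k m Xb X D j = Om_round k m Xb j (X j, D j)"
  by (simp add: Om_def Om_round_def Yv_eq_Y_round[where D=D] cong: if_cong)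

lemma prod_if_less:
  fixes a :: "nat \<Rightarrow> real"
  assumes "m \<le> n"
  shows "(\<Prod>j<n. if j < m then a j else 1) = (\<Prod>j<m. a j)"
proof -
  have "(\<Prod>j<n. if j < m then a j else 1) = (\<Prod>j\<in>{..<n} \<inter> {..<m}. a j)"
    by (subst prod.inter_restrict) auto
  also have "{..<n} \<inter> {..<m} = {..<m}" using assms by auto
  finally show ?thesis .
qed

section \<open>The parallel repetition bound\<close>

lemma finite_lists_nth_in:
  assumes "\<And>t. t < k \<Longrightarrow> finite (A t)"
  shows "finite {a. length a = k \<and> (\<forall>t<k. a ! t \<in> A t)}"
proof (rule finite_subset)
  show "{a. length a = k \<and> (\<forall>t<k. a ! t \<in> A t)} \<subseteq> {a. set a \<subseteq> (\<Union>t<k. A t) \<and> length a = k}"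
    by (force simp: in_set_conv_nth)
  show "finite {a. set a \<subseteq> (\<Union>t<k. A t) \<and> length a = k}"
    using assms by (intro finite_lists_length_eq) auto
qed

lemma card_lists_nth_in_le:
  assumes "\<And>t. t < k \<Longrightarrow> finite (A t)"
  shows "card {a. length a = k \<and> (\<forall>t<k. a ! t \<in> A t)} \<le> (\<Prod>t<k. card (A t))"
proof -
  let ?L = "{a. length a = k \<and> (\<forall>t<k. a ! t \<in> A t)}"
  have "card ?L \<le> card (PiE {0..<k} A)"
  proof (rule card_inj_on_le)
    show "inj_on (\<lambda>a. restrict (\<lambda>t. a ! t) {0..<k}) ?L"
    proof (rule inj_onI)
      fix a b assume ab: "a \<in> ?L" "b \<in> ?L"
        and eq: "restrict (\<lambda>t. a ! t) {0..<k} = restrict (\<lambda>t. b ! t) {0..<k}"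
      have "a ! t = b ! t" if "t < k" for t using fun_cong[OF eq, of t] that by simp
      thus "a = b" using ab by (intro nth_equalityI) auto
    qed
    show "(\<lambda>a. restrict (\<lambda>t. a ! t) {0..<k}) ` ?L \<subseteq> PiE {0..<k} A" by auto
    show "finite (PiE {0..<k} A)" using assms by (intro finite_PiE) auto
  qed
  thus ?thesis by (simp add: card_PiE atLeast0LessThan)
qed

lemma nth_omit:
  assumes "length a = k" "t < k" "l < k - 1"
  shows "omit t a ! l = (if l < t then a ! l else a ! Suc l)"
  using assms by (auto simp: omit_def nth_append min_def)

lemma omit_eq_iff:
  assumes a: "length a = k" and b: "length b = k" and t: "t < k"
  shows "omit t a = omit t b \<longleftrightarrow> (\<forall>j<k. j \<noteq> t \<longrightarrow> a ! j = b ! j)"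
proof
  assume eq: "omit t a = omit t b"
  show "\<forall>j<k. j \<noteq> t \<longrightarrow> a ! j = b ! j"
  proof (intro allI impI)
    fix j assume j: "j < k" "j \<noteq> t"
    show "a ! j = b ! j"
    proof (cases "j < t")
      case True
      thus ?thesis using eq nth_omit[OF a t, of j] nth_omit[OF b t, of j] t by simp
    next
      case False
      hence "j - 1 < k - 1" "\<not> j - 1 < t" "Suc (j - 1) = j" using j by auto
      thus ?thesis using eq nth_omit[OF a t, of "j - 1"] nth_omit[OF b t, of "j - 1"] by simp
    qed
  qed
next
  assume H: "\<forall>j<k. j \<noteq> t \<longrightarrow> a ! j = b ! j"
  show "omit t a = omit t b"
  proof (rule nth_equalityI)
    show "length (omit t a) = length (omit t b)" using a b by (simp add: omit_def)
    fix l assume "l < length (omit t a)"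
    hence l: "l < k - 1" using a t by (simp add: omit_def)
    show "omit t a ! l = omit t b ! l"
      using nth_omit[OF a t l] nth_omit[OF b t l] H l by auto
  qed
qed

locale repeated_game =
  fixes k n m :: nat and Xs :: "nat \<Rightarrow> 'q set" and As :: "nat \<Rightarrow> 'a set"
    and mu :: "'q list pmf" and V :: "'q list \<Rightarrow> 'a list \<Rightarrow> bool"
    and Xb :: "nat \<Rightarrow> 'q set" and f :: "nat \<Rightarrow> 'q list \<Rightarrow> 'a list"
  assumes game: "game k Xs As mu" and m1: "1 \<le> m" and mn: "m < n" and k1: "1 \<le> k"
    and strat: "strategy k n Xs As f"
    and pW: "prb (sample k n m mu) (Wev k m n f V) > 0"
begin

abbreviation "P \<equiv> sample k n m mu"
abbreviation "W \<equiv> Wev k m n f V"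
abbreviation "S \<equiv> set_pmf P"
abbreviation "round_of j w \<equiv> (fst w j, snd w j)"
abbreviation "Yi i w \<equiv> Yv k Xb (fst w) i"
abbreviation "Oi i w \<equiv> Om k m Xb (fst w) (snd w) i"
abbreviation "Omega w \<equiv> map (Om k m Xb (fst w) (snd w)) [0..<n]"
abbreviation "Zf w \<equiv> Zv k m n f (fst w)"
abbreviation "Ri i w \<equiv> (Zv k m n f (fst w), Om_minus k m n Xb (fst w) (snd w) i)"

lemma set_pmf_mu: "set_pmf mu \<subseteq> {x. length x = k \<and> (\<forall>t<k. x ! t \<in> Xs t)}"
  using game by (simp add: game_def)

lemma finite_Xs: "t < k \<Longrightarrow> finite (Xs t)" and finite_As: "t < k \<Longrightarrow> finite (As t)"
  using game by (auto simp: game_def)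

lemma finite_set_pmf_mu: "finite (set_pmf mu)"
  using finite_subset[OF set_pmf_mu finite_lists_nth_in[OF finite_Xs]] .

lemma finite_S: "finite S"
  using finite_set_pmf_sample[OF finite_set_pmf_mu] .

lemma question_in_support: "w \<in> S \<Longrightarrow> j < n \<Longrightarrow> fst w j \<in> set_pmf mu"
  by (auto simp: set_pmf_sample PiE_dflt_def)

lemma prob_rounds: "prb P {w. \<forall>j<n. round_of j w \<in> E j} = (\<Prod>j<n. prb (round_pmf k m mu j) (E j))"
  using prob_sample_rounds[of m n k mu E] mn by simp

lemma prob_round: "j < n \<Longrightarrow> prb P {w. round_of j w \<in> E} = prb (round_pmf k m mu j) E"
  using prob_sample_round[of m n j k mu E] mn by simp

lemma Yi_eq_Y_round: "Yi i w = Y_round k Xb (round_of i w)"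
  by (simp add: Yv_eq_Y_round[where D = "snd w"])

lemma Oi_eq_Om_round: "Oi j w = Om_round k m Xb j (round_of j w)"
  by (rule Om_eq_Om_round)

definition KL_Y :: "nat \<Rightarrow> real" where
  "KL_Y i = (\<Sum>w\<in>S. pmf_given P W w * ln (prob_given P W {w'. Yi i w' = Yi i w} / prb P {w'. Yi i w' = Yi i w}))"

lemma raz_Y: "(\<Sum>i\<in>{0..<m}. KL_Y i) \<le> ln (1 / prb P W)"
  unfolding KL_Y_def
proof (rule raz_lemma_independent[OF finite_S _ pW])
  fix w :: "(nat \<Rightarrow> 'q list) \<times> (nat \<Rightarrow> nat set)"
  have "{w'. \<forall>i\<in>{0..<m}. Yi i w' = Yi i w}
      = {w'. \<forall>j<n. round_of j w' \<in> (if j < m then {c. Y_round k Xb c = Yi j w} else UNIV)}"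
    using mn by (auto simp: Yi_eq_Y_round)
  hence "prb P {w'. \<forall>i\<in>{0..<m}. Yi i w' = Yi i w}
      = (\<Prod>j<n. prb (round_pmf k m mu j) (if j < m then {c. Y_round k Xb c = Yi j w} else UNIV))"
    by (simp add: prob_rounds)
  also have "\<dots> = (\<Prod>j<n. if j < m then prb (round_pmf k m mu j) {c. Y_round k Xb c = Yi j w} else 1)"
    by (intro prod.cong) auto
  also have "\<dots> = (\<Prod>j<m. prb (round_pmf k m mu j) {c. Y_round k Xb c = Yi j w})"
    using mn by (intro prod_if_less) simp
  also have "\<dots> = (\<Prod>i\<in>{0..<m}. prb P {w'. Yi i w' = Yi i w})"
    using mn prob_round[of _ "{c. Y_round k Xb c = Yi _ w}"]
    by (intro prod.cong) (auto simp: Yi_eq_Y_round atLeast0LessThan)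
  finally show "prb P {w'. \<forall>i\<in>{0..<m}. Yi i w' = Yi i w} = (\<Prod>i\<in>{0..<m}. prb P {w'. Yi i w' = Yi i w})" .
qed simp

definition answer_tuples :: "'a list set" where
  "answer_tuples = {a. length a = k \<and> (\<forall>t<k. a ! t \<in> As t)}"

definition nZ :: real where
  "nZ = real ((\<Prod>t<k. card (As t)) ^ (n - m))"

lemma ansv_in_answer_tuples:
  assumes w: "w \<in> S" and j: "j < n"
  shows "ansv k n f (fst w) j \<in> answer_tuples"
proof -
  have "f t (map (\<lambda>j. fst w j ! t) [0..<n]) ! j \<in> As t" if t: "t < k" for t
  proof -
    let ?qs = "map (\<lambda>j. fst w j ! t) [0..<n]"
    have "set ?qs \<subseteq> Xs t" using question_in_support[OF w] set_pmf_mu t by fastforce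
    hence "length (f t ?qs) = n \<and> set (f t ?qs) \<subseteq> As t" using strat t by (simp add: strategy_def)
    thus ?thesis using j by (auto dest!: nth_mem)
  qed
  thus ?thesis by (simp add: answer_tuples_def ansv_def)
qed

lemma card_Z_le: "real (card (Zf ` (S \<inter> W))) \<le> nZ"
proof -
  have fin: "finite answer_tuples"
    unfolding answer_tuples_def using finite_As by (rule finite_lists_nth_in)
  have "Zf ` (S \<inter> W) \<subseteq> {zs. set zs \<subseteq> answer_tuples \<and> length zs = n - m}"
    using ansv_in_answer_tuples by (auto simp: Zv_def)
  hence "card (Zf ` (S \<inter> W)) \<le> card {zs. set zs \<subseteq> answer_tuples \<and> length zs = n - m}"
    using fin by (intro card_mono) (auto intro: finite_lists_length_eq)
  also have "\<dots> = card answer_tuples ^ (n - m)" using fin by (simp add: card_lists_length_eq)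
  also have "\<dots> \<le> (\<Prod>t<k. card (As t)) ^ (n - m)"
    using card_lists_nth_in_le[OF finite_As] by (intro power_mono) (simp_all add: answer_tuples_def)
  finally show ?thesis unfolding nZ_def by linarith
qed

text \<open>Given \<open>\<Omega>\<close>, the rounds stay independent and \<open>Y\<^sub>i\<close> depends on \<open>\<Omega>\<close> only through \<open>\<Omega>\<^sub>i\<close>:
  this is the hypothesis of Raz's lemma.\<close>

lemma raz_Omega_Z:
  "(\<Sum>i\<in>{0..<m}. \<Sum>w\<in>S. pmf_given P W w * ln (prob_given P W {w'. Yi i w' = Yi i w \<and> Omega w' = Omega w \<and> Zf w' = Zf w}
          / (prb P {w'. Yi i w' = Yi i w \<and> Oi i w' = Oi i w} / prb P {w'. Oi i w' = Oi i w} * prob_given P W {w'. Omega w' = Omega w \<and> Zf w' = Zf w})))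
     \<le> ln (nZ / prb P W)"
proof (rule raz_lemma[OF finite_S _ pW card_Z_le])
  show "finite {0..<m}" by simp
  fix w assume w: "w \<in> S"
  define E1 where "E1 j = {c. (j < m \<longrightarrow> Y_round k Xb c = Yi j w) \<and> Om_round k m Xb j c = Oi j w}" for j
  define E2 where "E2 j = {c. Om_round k m Xb j c = Oi j w}" for j
  define a where "a j = prb (round_pmf k m mu j) (E1 j)" for j
  define b where "b j = prb (round_pmf k m mu j) (E2 j)" for j
  have ev1: "{w'. (\<forall>i\<in>{0..<m}. Yi i w' = Yi i w) \<and> Omega w' = Omega w} = {w'. \<forall>j<n. round_of j w' \<in> E1 j}"
    using mn by (auto simp: E1_def Yi_eq_Y_round Oi_eq_Om_round[symmetric] map_eq_conv)
  have ev2: "{w'. Omega w' = Omega w} = {w'. \<forall>j<n. round_of j w' \<in> E2 j}"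
    by (auto simp: E2_def Oi_eq_Om_round[symmetric] map_eq_conv)
  have ev3: "{w'. Yi i w' = Yi i w \<and> Oi i w' = Oi i w} = {w'. round_of i w' \<in> E1 i}" if "i < m" for i
    using that by (auto simp: E1_def Yi_eq_Y_round Oi_eq_Om_round[symmetric])
  have ev4: "{w'. Oi i w' = Oi i w} = {w'. round_of i w' \<in> E2 i}" for i
    by (auto simp: E2_def Oi_eq_Om_round[symmetric])
  have bpos: "b j > 0" if "j < n" for j
  proof -
    have "prb P {w'. Oi j w' = Oi j w} > 0" using w by (intro measure_pmf_posI) auto
    thus ?thesis unfolding ev4 b_def using prob_round[OF that] by simp
  qed
  have ab: "a j = (if j < m then b j * (a j / b j) else b j)" if "j < n" for j
    using bpos[OF that] by (auto simp: a_def b_def E1_def E2_def)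
  have "prb P {w'. (\<forall>i\<in>{0..<m}. Yi i w' = Yi i w) \<and> Omega w' = Omega w} = (\<Prod>j<n. a j)"
    unfolding ev1 a_def by (rule prob_rounds)
  also have "\<dots> = (\<Prod>j<n. b j * (if j < m then a j / b j else 1))"
  proof (rule prod.cong[OF refl])
    fix j assume "j \<in> {..<n}"
    hence j: "j < n" by simp
    show "a j = b j * (if j < m then a j / b j else 1)"
      using ab[OF j] by (cases "j < m") simp_all
  qed
  also have "\<dots> = (\<Prod>j<n. b j) * (\<Prod>j<n. if j < m then a j / b j else 1)"
    by (rule prod.distrib)
  also have "(\<Prod>j<n. if j < m then a j / b j else 1) = (\<Prod>j<m. a j / b j)"
    using mn by (intro prod_if_less) simp
  also have "(\<Prod>j<n. b j) = prb P {w'. Omega w' = Omega w}"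
    unfolding ev2 b_def by (rule prob_rounds[symmetric])
  also have "(\<Prod>j<m. a j / b j) = (\<Prod>i\<in>{0..<m}. prb P {w'. Yi i w' = Yi i w \<and> Oi i w' = Oi i w} / prb P {w'. Oi i w' = Oi i w})"
  proof (rule prod.cong)
    fix i assume i: "i \<in> {0..<m}"
    hence "i < n" "i < m" using mn by auto
    thus "a i / b i = prb P {w'. Yi i w' = Yi i w \<and> Oi i w' = Oi i w} / prb P {w'. Oi i w' = Oi i w}"
      unfolding ev3[OF \<open>i < m\<close>] ev4 a_def b_def using prob_round by simp
  qed (simp add: atLeast0LessThan)
  finally show "prb P {w'. (\<forall>i\<in>{0..<m}. Yi i w' = Yi i w) \<and> Omega w' = Omega w}
         = prb P {w'. Omega w' = Omega w} * (\<Prod>i\<in>{0..<m}. prb P {w'. Yi i w' = Yi i w \<and> Oi i w' = Oi i w} / prb P {w'. Oi i w' = Oi i w})" .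
qed

definition KL_markov :: "nat \<Rightarrow> real" where
  "KL_markov i = (\<Sum>w\<in>S. pmf_given P W w *
     ln (prob_given P W {w'. (Yi i w', Oi i w', Ri i w') = (Yi i w, Oi i w, Ri i w)}
         / markov_approx P W (Yi i) (Oi i) (Ri i) (Yi i w) (Oi i w) (Ri i w)))"

lemma Omega_Z_eq_iff:
  assumes "i < n"
  shows "(Omega w' = Omega w \<and> Zf w' = Zf w) \<longleftrightarrow> (Oi i w' = Oi i w \<and> Ri i w' = Ri i w)"
proof -
  have "Omega w' = Omega w \<longleftrightarrow> (\<forall>j<n. Om k m Xb (fst w') (snd w') j = Om k m Xb (fst w) (snd w) j)"
    by (auto simp: map_eq_conv)
  moreover have "Om_minus k m n Xb (fst w') (snd w') i = Om_minus k m n Xb (fst w) (snd w) i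
      \<longleftrightarrow> (\<forall>j<n. j \<noteq> i \<longrightarrow> Om k m Xb (fst w') (snd w') j = Om k m Xb (fst w) (snd w) j)"
    by (auto simp: Om_minus_def map_eq_conv)
  ultimately show ?thesis using assms by auto
qed

lemma raz_markov: "(\<Sum>i\<in>{0..<m}. KL_markov i) \<le> ln (nZ / prb P W)"
proof -
  have "KL_markov i = (\<Sum>w\<in>S. pmf_given P W w *
      ln (prob_given P W {w'. Yi i w' = Yi i w \<and> Omega w' = Omega w \<and> Zf w' = Zf w}
          / (prb P {w'. Yi i w' = Yi i w \<and> Oi i w' = Oi i w} / prb P {w'. Oi i w' = Oi i w}
             * prob_given P W {w'. Omega w' = Omega w \<and> Zf w' = Zf w})))"
    if "i \<in> {0..<m}" for i
    using Omega_Z_eq_iff[of i] that mn by (simp add: KL_markov_def markov_approx_def conj_ac)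
  thus ?thesis using raz_Omega_Z by simp
qed

text \<open>The value of \<open>\<Omega>\<^sub>i\<close> when \<open>D\<^sub>i = [k] - {t}\<close> and \<open>Y\<^sub>i\<close> agrees with \<open>y\<close> off \<open>t\<close>.\<close>

definition Om_without :: "nat \<Rightarrow> 'q option list \<Rightarrow> (nat set \<times> (nat \<Rightarrow> 'q option option)) + 'q list" where
  "Om_without t y = Inl ({0..<k} - {t}, (\<lambda>t'. if t' \<in> {0..<k} - {t} then Some (y ! t') else None))"

lemma Oi_eq_Om_without_iff:
  assumes "i < m" "t < k" "length y = k"
  shows "Oi i w = Om_without t y \<longleftrightarrow> snd w i = {0..<k} - {t} \<and> omit t (Yi i w) = omit t y"
proof -
  have "Oi i w = Inl (snd w i, (\<lambda>t'. if t' \<in> snd w i then Some (Yi i w ! t') else None))"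
    using assms(1) by (simp add: Om_def)
  hence "Oi i w = Om_without t y \<longleftrightarrow> snd w i = {0..<k} - {t} \<and> (\<forall>t'\<in>{0..<k} - {t}. Yi i w ! t' = y ! t')"
    by (auto simp: Om_without_def fun_eq_iff split: if_splits)
  moreover have "(\<forall>t'\<in>{0..<k} - {t}. Yi i w ! t' = y ! t') \<longleftrightarrow> omit t (Yi i w) = omit t y"
    using omit_eq_iff[of "Yi i w" k y t] assms(2,3) by (auto simp: Yv_def)
  ultimately show ?thesis by simp
qed

lemma prob_D_eq:
  assumes i: "i < m" and t: "t < k"
    and E: "\<And>X D d'. (X, D) \<in> E \<longleftrightarrow> (X, D(i := d')) \<in> E"
  shows "prb P {w. snd w i = {0..<k} - {t} \<and> w \<in> E} = prb P E / real k"
proof -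
  have "{0..<k} - {t} \<in> drop_one_subsets k" using drop_one_subsets_eq[OF k1] t by auto
  thus ?thesis
    using prob_sample_fix_D[OF i finite_set_pmf_mu E, where d = "{0..<k} - {t}"] prob_uniform_drop_one[OF k1]
    by simp
qed

lemma Om_minus_fun_upd: "Om_minus k m n Xb X (D(i := d')) i = Om_minus k m n Xb X D i"
  by (simp add: Om_minus_def Om_def)

text \<open>The mixed term of \<open>tvd_PYcond_split\<close> for \<open>h = omit t\<close> is, up to the factor \<open>k\<close>,
  the distance between \<open>P\<^bsub>Y\<^sub>i \<Omega>\<^sub>i R\<^sub>i|W\<^esub>\<close> and \<open>P\<^bsub>Y\<^sub>i|\<Omega>\<^sub>i\<^esub> P\<^bsub>\<Omega>\<^sub>i R\<^sub>i|W\<^esub>\<close> at the points where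
  \<open>D\<^sub>i = [k] - {t}\<close>: on that event \<open>\<Omega>\<^sub>i\<close> reveals exactly \<open>omit t Y\<^sub>i\<close>, and the event has
  probability \<open>1 / k\<close> independently of everything else.\<close>

lemma mixed_term_eq:
  assumes i: "i < m" and t: "t < k" and y: "length y = k"
  shows "\<bar>prb P {w. Ri i w = r \<and> w \<in> W \<and> Yi i w = y} / prb P W
      - prb P {w. Yi i w = y} / prb P {w. omit t (Yi i w) = omit t y}
        * (prb P {w. Ri i w = r \<and> w \<in> W \<and> omit t (Yi i w) = omit t y} / prb P W)\<bar>
    = real k * \<bar>prob_given P W {w. (Yi i w, Oi i w, Ri i w) = (y, Om_without t y, r)}
        - markov_approx P W (Yi i) (Oi i) (Ri i) y (Om_without t y) r\<bar>"
proof -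
  define d where "d = {0..<k} - {t}"
  have kp: "real k > 0" using k1 by simp
  have Om: "Oi i w = Om_without t y \<longleftrightarrow> snd w i = d \<and> omit t (Yi i w) = omit t y" for w
    unfolding d_def by (rule Oi_eq_Om_without_iff[OF i t y])
  have D1: "prb P {w. snd w i = d \<and> w \<in> {w. Ri i w = r \<and> w \<in> W \<and> Yi i w = y}} = prb P {w. Ri i w = r \<and> w \<in> W \<and> Yi i w = y} / real k"
    unfolding d_def by (rule prob_D_eq[OF i t]) (simp add: Wev_def Om_minus_fun_upd)
  have D2: "prb P {w. snd w i = d \<and> w \<in> {w. Ri i w = r \<and> w \<in> W \<and> omit t (Yi i w) = omit t y}} = prb P {w. Ri i w = r \<and> w \<in> W \<and> omit t (Yi i w) = omit t y} / real k"
    unfolding d_def by (rule prob_D_eq[OF i t]) (simp add: Wev_def Om_minus_fun_upd)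
  have D3: "prb P {w. snd w i = d \<and> w \<in> {w. Yi i w = y}} = prb P {w. Yi i w = y} / real k"
    unfolding d_def by (rule prob_D_eq[OF i t]) (simp add: Wev_def Om_minus_fun_upd)
  have D4: "prb P {w. snd w i = d \<and> w \<in> {w. omit t (Yi i w) = omit t y}} = prb P {w. omit t (Yi i w) = omit t y} / real k"
    unfolding d_def by (rule prob_D_eq[OF i t]) (simp add: Wev_def Om_minus_fun_upd)
  have "prob_given P W {w. (Yi i w, Oi i w, Ri i w) = (y, Om_without t y, r)}
      = prb P {w. snd w i = d \<and> w \<in> {w. Ri i w = r \<and> w \<in> W \<and> Yi i w = y}} / prb P W"
    unfolding prob_given_def using Om by (intro arg_cong[where f = "\<lambda>A. prb P A / prb P W"]) auto
  also have "\<dots> = prb P {w. Ri i w = r \<and> w \<in> W \<and> Yi i w = y} / prb P W / real k"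
    by (simp only: D1) simp
  finally have joint: "prob_given P W {w. (Yi i w, Oi i w, Ri i w) = (y, Om_without t y, r)}
      = prb P {w. Ri i w = r \<and> w \<in> W \<and> Yi i w = y} / prb P W / real k" .
  have "markov_approx P W (Yi i) (Oi i) (Ri i) y (Om_without t y) r
      = prb P {w. snd w i = d \<and> w \<in> {w. Yi i w = y}}
        / prb P {w. snd w i = d \<and> w \<in> {w. omit t (Yi i w) = omit t y}}
        * (prb P {w. snd w i = d \<and> w \<in> {w. Ri i w = r \<and> w \<in> W \<and> omit t (Yi i w) = omit t y}} / prb P W)"
    unfolding markov_approx_def prob_given_def using Om
    by (intro arg_cong2[where f = "\<lambda>a b. a * b"] arg_cong2[where f = "(/)"] arg_cong[where f = "prb P"]) auto
  also have "\<dots> = prb P {w. Yi i w = y} / prb P {w. omit t (Yi i w) = omit t y}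
        * (prb P {w. Ri i w = r \<and> w \<in> W \<and> omit t (Yi i w) = omit t y} / prb P W) / real k"
    by (simp only: D2 D3 D4) (use kp in simp)
  finally have approx: "markov_approx P W (Yi i) (Oi i) (Ri i) y (Om_without t y) r
      = prb P {w. Yi i w = y} / prb P {w. omit t (Yi i w) = omit t y}
        * (prb P {w. Ri i w = r \<and> w \<in> W \<and> omit t (Yi i w) = omit t y} / prb P W) / real k" .
  have abs_scale: "\<bar>a - b\<bar> = real k * \<bar>a / real k - b / real k\<bar>" for a b :: real
  proof -
    have "a / real k - b / real k = (a - b) / real k" by (simp add: diff_divide_distrib)
    thus ?thesis using kp by (simp add: abs_divide)
  qed
  show ?thesis unfolding joint approx by (rule abs_scale)
qed

lemma mixed_term_bound:
  assumes i: "i < m"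
  shows "(\<Sum>t<k. \<Sum>y\<in>Yi i ` S. \<Sum>r\<in>Ri i ` S.
     \<bar>prb P {w. Ri i w = r \<and> w \<in> W \<and> Yi i w = y} / prb P W
      - prb P {w. Yi i w = y} / prb P {w. omit t (Yi i w) = omit t y}
        * (prb P {w. Ri i w = r \<and> w \<in> W \<and> omit t (Yi i w) = omit t y} / prb P W)\<bar>)
   \<le> real k * sqrt (2 * KL_markov i)"
proof -
  define Ys where "Ys = Yi i ` S"
  define Rs where "Rs = Ri i ` S"
  define Os where "Os = Oi i ` S \<union> (\<lambda>(t, y). Om_without t y) ` ({0..<k} \<times> Ys)"
  define \<phi> where "\<phi> = ((\<lambda>(t, y, r). (y, Om_without t y, r))
    :: nat \<times> 'q option list \<times> 'a list list \<times> ((nat set \<times> (nat \<Rightarrow> 'q option option)) + 'q list) list \<Rightarrow> _)"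
  define dist where "dist = (\<lambda>(y, u, r). \<bar>prob_given P W {w. (Yi i w, Oi i w, Ri i w) = (y, u, r)}
      - markov_approx P W (Yi i) (Oi i) (Ri i) y u r\<bar>)"
  have fin: "finite Ys" "finite Os" "finite Rs" using finite_S by (auto simp: Ys_def Os_def Rs_def)
  have inj: "inj_on \<phi> ({0..<k} \<times> Ys \<times> Rs)"
  proof (rule inj_onI)
    fix x x' assume "x \<in> {0..<k} \<times> Ys \<times> Rs" "x' \<in> {0..<k} \<times> Ys \<times> Rs" "\<phi> x = \<phi> x'"
    thus "x = x'" using inj_onD[OF inj_on_Diff_singleton, of "fst x" "fst x'"]
      by (auto simp: \<phi>_def Om_without_def split: prod.splits)
  qed
  have "(\<Sum>t<k. \<Sum>y\<in>Ys. \<Sum>r\<in>Rs.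
     \<bar>prb P {w. Ri i w = r \<and> w \<in> W \<and> Yi i w = y} / prb P W
      - prb P {w. Yi i w = y} / prb P {w. omit t (Yi i w) = omit t y}
        * (prb P {w. Ri i w = r \<and> w \<in> W \<and> omit t (Yi i w) = omit t y} / prb P W)\<bar>)
      = (\<Sum>t<k. \<Sum>y\<in>Ys. \<Sum>r\<in>Rs. real k * dist (\<phi> (t, y, r)))"
  proof (intro sum.cong refl)
    fix t y r assume "t \<in> {..<k}" "y \<in> Ys"
    moreover from \<open>y \<in> Ys\<close> have "length y = k" by (auto simp: Ys_def Yv_def)
    ultimately show "\<bar>prb P {w. Ri i w = r \<and> w \<in> W \<and> Yi i w = y} / prb P W
        - prb P {w. Yi i w = y} / prb P {w. omit t (Yi i w) = omit t y}
          * (prb P {w. Ri i w = r \<and> w \<in> W \<and> omit t (Yi i w) = omit t y} / prb P W)\<bar>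
        = real k * dist (\<phi> (t, y, r))"
      using mixed_term_eq[OF i, of t y r] by (simp add: dist_def \<phi>_def)
  qed
  also have "\<dots> = real k * (\<Sum>x\<in>{0..<k} \<times> Ys \<times> Rs. dist (\<phi> x))"
    by (simp add: sum_distrib_left sum.cartesian_product' atLeast0LessThan)
  also have "\<dots> = real k * (\<Sum>v\<in>\<phi> ` ({0..<k} \<times> Ys \<times> Rs). dist v)"
    by (simp add: sum.reindex[OF inj])
  also have "\<dots> \<le> real k * (\<Sum>v\<in>Ys \<times> Os \<times> Rs. dist v)"
    using fin by (intro mult_left_mono sum_mono2) (auto simp: \<phi>_def Os_def dist_def)
  also have "\<dots> \<le> real k * sqrt (2 * KL_markov i)"
    unfolding dist_def KL_markov_def
    by (intro mult_left_mono pinsker_markov_approx[OF finite_S pW fin]) (auto simp: Ys_def Os_def Rs_def)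
  finally show ?thesis by (simp add: Ys_def Rs_def)
qed

lemma KL_Y_bound:
  "(\<Sum>y\<in>Yi i ` S. \<bar>prb P {w. Yi i w = y} - prb P {w. w \<in> W \<and> Yi i w = y} / prb P W\<bar>) \<le> sqrt (2 * KL_Y i)"
  unfolding KL_Y_def by (rule pinsker_marginal[OF finite_S pW])

lemma KL_Y_nonneg: "KL_Y i \<ge> 0"
proof -
  have "0 \<le> sqrt (2 * KL_Y i)" using KL_Y_bound by (rule order_trans[rotated]) (auto intro: sum_nonneg)
  thus ?thesis by simp
qed

lemma KL_markov_nonneg:
  assumes "i < m"
  shows "KL_markov i \<ge> 0"
proof -
  have "0 \<le> real k * sqrt (2 * KL_markov i)"
    using mixed_term_bound[OF assms] by (rule order_trans[rotated]) (auto intro!: sum_nonneg)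
  thus ?thesis using k1 by (simp add: zero_le_mult_iff)
qed

lemma round_tvd_bound:
  assumes i: "i < m"
  shows "(\<Sum>t<k. tvd (PYcond P (Yi i) (Ri i) W id) (PYcond P (Yi i) (Ri i) W (omit t)))
       \<le> real k * sqrt (2 * KL_Y i) + real k / 2 * sqrt (2 * KL_markov i)"
proof -
  have "2 * (\<Sum>t<k. tvd (PYcond P (Yi i) (Ri i) W id) (PYcond P (Yi i) (Ri i) W (omit t)))
      \<le> (\<Sum>t<k. 2 * sqrt (2 * KL_Y i) + (\<Sum>y\<in>Yi i ` S. \<Sum>r\<in>Ri i ` S.
     \<bar>prb P {w. Ri i w = r \<and> w \<in> W \<and> Yi i w = y} / prb P W
      - prb P {w. Yi i w = y} / prb P {w. omit t (Yi i w) = omit t y}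
        * (prb P {w. Ri i w = r \<and> w \<in> W \<and> omit t (Yi i w) = omit t y} / prb P W)\<bar>))"
    unfolding sum_distrib_left
    by (intro sum_mono order_trans[OF tvd_PYcond_split[OF finite_S pW]] add_right_mono mult_left_mono KL_Y_bound)
      simp
  also have "\<dots> \<le> real k * (2 * sqrt (2 * KL_Y i)) + real k * sqrt (2 * KL_markov i)"
    using mixed_term_bound[OF i] by (simp add: sum.distrib)
  finally show ?thesis by simp
qed

lemma As_nonempty:
  assumes t: "t < k"
  shows "As t \<noteq> {}"
proof -
  obtain x where "x \<in> set_pmf mu" using set_pmf_not_empty[of mu] by blast
  hence "x ! t \<in> Xs t" using set_pmf_mu t by auto
  hence "set (replicate n (x ! t)) \<subseteq> Xs t" by auto
  hence "length (f t (replicate n (x ! t))) = n \<and> set (f t (replicate n (x ! t))) \<subseteq> As t"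
    using strat t unfolding strategy_def by auto
  thus ?thesis using mn by (auto dest!: nth_mem[of 0])
qed

lemma prod_card_As_ge_1: "(\<Prod>t<k. card (As t)) \<ge> 1"
proof -
  have "card (As t) \<ge> 1" if "t < k" for t
    using As_nonempty[OF that] finite_As[OF that] by (simp add: Suc_le_eq card_gt_0_iff)
  hence "(\<Prod>t<k. card (As t)) \<ge> (\<Prod>t<k. 1::nat)" by (intro prod_mono) auto
  thus ?thesis by simp
qed

lemma nZ_ge_1: "nZ \<ge> 1"
proof -
  have "1 \<le> (\<Prod>t<k. card (As t)) ^ (n - m)" by (rule one_le_power[OF prod_card_As_ge_1])
  thus ?thesis unfolding nZ_def by (metis of_nat_1 of_nat_le_iff)
qed

lemma log_bound_eq:
  "real (n - m) * log 2 (real (\<Prod>t<k. card (As t))) + log 2 (1 / prb P W) = ln (nZ / prb P W) / ln 2"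
proof -
  have "real (\<Prod>t<k. card (As t)) > 0" using prod_card_As_ge_1 by linarith
  hence "real (n - m) * log 2 (real (\<Prod>t<k. card (As t))) = log 2 nZ"
    by (simp add: nZ_def log_nat_power)
  moreover have "log 2 nZ + log 2 (1 / prb P W) = log 2 (nZ / prb P W)"
    using nZ_ge_1 pW by (simp add: log_divide_pos)
  ultimately show ?thesis by (simp add: log_def)
qed

theorem corollary_bound:
  "(\<Sum>i<m. \<Sum>t<k. tvd (PYcond P (Yi i) (Ri i) W id) (PYcond P (Yi i) (Ri i) W (omit t))) / real m
   \<le> 3 * real k * sqrt ((real (n - m) * log 2 (real (\<Prod>t<k. card (As t))) + log 2 (1 / prb P W)) / real m)"
proof -
  define \<Lambda> where "\<Lambda> = ln (nZ / prb P W)"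
  have "prb P W \<le> nZ" using nZ_ge_1 measure_pmf.prob_le_1[of P W] by linarith
  hence "1 \<le> nZ / prb P W" using pW by (simp add: le_divide_eq_1)
  hence \<Lambda>0: "\<Lambda> \<ge> 0" by (simp add: \<Lambda>_def)
  have "(\<Sum>i<m. KL_Y i) \<le> ln (1 / prb P W)" using raz_Y by (simp add: atLeast0LessThan)
  also have "\<dots> \<le> \<Lambda>" using nZ_ge_1 pW by (simp add: \<Lambda>_def divide_right_mono)
  finally have Y: "(\<Sum>i<m. KL_Y i) \<le> \<Lambda>" .
  have M: "(\<Sum>i<m. KL_markov i) \<le> \<Lambda>" using raz_markov by (simp add: \<Lambda>_def atLeast0LessThan)
  have "(\<Sum>i<m. \<Sum>t<k. tvd (PYcond P (Yi i) (Ri i) W id) (PYcond P (Yi i) (Ri i) W (omit t)))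
      \<le> (\<Sum>i<m. real k * sqrt (2 * KL_Y i) + real k / 2 * sqrt (2 * KL_markov i))"
    by (intro sum_mono round_tvd_bound) simp
  also have "\<dots> = real k * (\<Sum>i<m. sqrt (2 * KL_Y i)) + real k / 2 * (\<Sum>i<m. sqrt (2 * KL_markov i))"
    by (simp add: sum.distrib sum_distrib_left)
  also have "\<dots> \<le> real k * sqrt (real m * (2 * \<Lambda>)) + real k / 2 * sqrt (real m * (2 * \<Lambda>))"
    using sum_sqrt_double_le[of "{..<m}" KL_Y \<Lambda>] sum_sqrt_double_le[of "{..<m}" KL_markov \<Lambda>]
      Y M KL_Y_nonneg KL_markov_nonneg
    by (intro add_mono mult_left_mono) auto
  finally show ?thesis
    using sqrt_bound_div_ln2[OF \<Lambda>0] m1 log_bound_eq by (simp add: \<Lambda>_def algebra_simps)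
qed

end

theorem corollary4p4:
  fixes k n m :: nat
    and Xs :: "nat \<Rightarrow> 'q set" and As :: "nat \<Rightarrow> 'a set"
    and mu :: "'q list pmf" and V :: "'q list \<Rightarrow> 'a list \<Rightarrow> bool"
    and \<alpha> :: real and Xb :: "nat \<Rightarrow> 'q set"
    and f :: "nat \<Rightarrow> 'q list \<Rightarrow> 'a list"
  assumes "game k Xs As mu"
    and "\<alpha> > 0" and "anchored k Xs mu \<alpha> Xb"
    and "1 \<le> m" and "m < n"
    and "strategy k n Xs As f"
    and "prb (sample k n m mu) (Wev k m n f V) > 0"
  shows
    "(\<Sum>i<m. \<Sum>t<k.
        tvd (PYcond (sample k n m mu) (\<lambda>\<omega>. Yv k Xb (fst \<omega>) i)
               (\<lambda>\<omega>. (Zv k m n f (fst \<omega>), Om_minus k m n Xb (fst \<omega>) (snd \<omega>) i))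
               (Wev k m n f V) id)
            (PYcond (sample k n m mu) (\<lambda>\<omega>. Yv k Xb (fst \<omega>) i)
               (\<lambda>\<omega>. (Zv k m n f (fst \<omega>), Om_minus k m n Xb (fst \<omega>) (snd \<omega>) i))
               (Wev k m n f V) (omit t))) / real m
     \<le> 3 * real k * sqrt ((real (n - m) * log 2 (real (\<Prod>t<k. card (As t)))
                           + log 2 (1 / prb (sample k n m mu) (Wev k m n f V))) / real m)"
proof (cases "k = 0")
  case False
  then interpret repeated_game k n m Xs As mu V Xb f
    using assms by unfold_locales auto
  show ?thesis by (rule corollary_bound)
qed simp

end
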